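(* Let $A$ be a basic connected finite dimensional algebra over an algebraically closed field $k$ with ordinary quiver $Q$ without oriented cycles, and let $D\subseteq\mathsf{HH}^1(A)$. Then $D$ is diagonalizable if and only if there exists a presentation $\nu\colon kQ\twoheadrightarrow A$ such that $D\subseteq\mathsf{Im}(\theta_\nu)$.
   Context: Fix a complete set $e_1,\dots,e_n$ of primitive orthogonal idempotents of $A$ indexed by $Q_0=\{1,\dots,n\}$, $E=\bigoplus ke_i$, $\mathfrak r$ the radical. A presentation is a surjective algebra map $\nu\colon kQ\twoheadrightarrow A$ with admissible kernel ($(kQ^+)^N\subseteq\mathsf{Ker}\,\nu\subseteq(kQ^+)^2$ for some $N\ge2$, $kQ^+$ the arrow ideal) and $\nu(e_i)=e_i$. $\mathsf{HH}^1(A)=Der_0(A)/Int_0(A)$, with $Der_0(A)$ the derivations vanishing on all $e_i$ (commutator bracket) and $Int_0(A)=\{a\mapsto ea-ae\mid e\in E\}$. A basis of $A$ is a $k$-basis $\mathcal B\subseteq\bigcup_{i,j}e_jAe_i$ containing $e_1,\dots,e_n$ with its other elements in $\mathfrak r$; a subset $D\subseteq\mathsf{HH}^1(A)$ is diagonalizable if there is a basis $\mathcal B$ such that every $f\in D$ is represented by a derivation diagonal in $\mathcal B$. Walks: paths in $Q$ with formal inverse arrows allowed. For $I=\mathsf{Ker}\,\nu$, $\sim_I$ is the smallest equivalence relation on walks with $\alpha\alpha^{-1}\sim_I e_y$, $\alpha^{-1}\alpha\sim_I e_x$ for arrows $\alpha\colon x\to y$, compatible with concatenation, and identifying two paths occurring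 with nonzero coefficient in a same minimal relation of $I$ (a nonzero $\sum t_iu_i\in I$, $t_i\neq0$, distinct paths, no nonempty proper subsum in $I$). $\pi_1(Q,I)$ is the group of classes of closed walks at a fixed vertex $x_0$. Fix a maximal tree $T$ of $Q$, $\gamma_x$ the minimal walk in $T$ from $x_0$ to $x$. For a group homomorphism $f\colon\pi_1(Q,I)\to k^+$, $\theta_\nu(f)$ is the class of the derivation $\tilde f$ with $\tilde f(\nu(u))=f([\gamma_y^{-1}u\gamma_x]_I)\nu(u)$ for paths $u$ from $x$ to $y$. *)

theory Defs
  imports Complex_Main "HOL-Computational_Algebra.Polynomial"
begin

definition alg_closed :: "'k::field itself \<Rightarrow> bool" where
  "alg_closed _ \<longleftrightarrow> (\<forall>p :: 'k poly. degree p > 0 \<longrightarrow> (\<exists>z. poly p z = 0))"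

definition fd_algebra :: "('k::field \<Rightarrow> 'a::ring_1 \<Rightarrow> 'a) \<Rightarrow> bool" where
  "fd_algebra scale \<longleftrightarrow> vector_space scale \<and>
     (\<forall>c x y. scale c (x * y) = scale c x * y \<and> scale c (x * y) = x * scale c y) \<and>
     (\<exists>S. finite S \<and> module.span scale S = UNIV)"

definition right_ideal :: "'a::ring_1 set \<Rightarrow> bool" where
  "right_ideal M \<longleftrightarrow> 0 \<in> M \<and> (\<forall>x\<in>M. \<forall>y\<in>M. x + y \<in> M) \<and> (\<forall>x\<in>M. - x \<in> M)
      \<and> (\<forall>x\<in>M. \<forall>a. x * a \<in> M)"

definition maximal_right_ideal :: "'a::ring_1 set \<Rightarrow> bool" where
  "maximal_right_ideal M \<longleftrightarrow> right_ideal M \<and> M \<noteq> UNIV \<and>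
     (\<forall>N. right_ideal N \<and> M \<subseteq> N \<and> N \<noteq> UNIV \<longrightarrow> N = M)"

definition rad :: "'a::ring_1 set" where
  "rad = \<Inter> {M. maximal_right_ideal M}"

definition connected_algebra :: "'a::ring_1 itself \<Rightarrow> bool" where
  "connected_algebra _ \<longleftrightarrow> (1::'a) \<noteq> 0 \<and>
     (\<forall>c::'a. c * c = c \<and> (\<forall>a. c * a = a * c) \<longrightarrow> c = 0 \<or> c = 1)"

definition primitive_idempotent :: "'a::ring_1 \<Rightarrow> bool" where
  "primitive_idempotent x \<longleftrightarrow> x * x = x \<and> x \<noteq> 0 \<and>
     (\<forall>f g. f * f = f \<and> g * g = g \<and> f * g = 0 \<and> g * f = 0 \<and> f + g = x \<longrightarrow> f = 0 \<or> g = 0)"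

definition complete_prim_orth_idems :: "nat \<Rightarrow> (nat \<Rightarrow> 'a::ring_1) \<Rightarrow> bool" where
  "complete_prim_orth_idems n e \<longleftrightarrow>
     (\<forall>i\<in>{1..n}. primitive_idempotent (e i)) \<and>
     (\<forall>i\<in>{1..n}. \<forall>j\<in>{1..n}. i \<noteq> j \<longrightarrow> e i * e j = 0) \<and>
     sum e {1..n} = 1"

text \<open>Isomorphism of right A-modules (k-linearity is automatic since scalars act through A).\<close>
definition right_module_iso :: "'a::ring_1 set \<Rightarrow> 'a set \<Rightarrow> bool" where
  "right_module_iso P P' \<longleftrightarrow> (\<exists>h. bij_betw h P P' \<and>
     (\<forall>x\<in>P. \<forall>y\<in>P. h (x + y) = h x + h y) \<and> (\<forall>x\<in>P. \<forall>a. h (x * a) = h x * a))"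

definition basic_algebra :: "nat \<Rightarrow> (nat \<Rightarrow> 'a::ring_1) \<Rightarrow> bool" where
  "basic_algebra n e \<longleftrightarrow> (\<forall>i\<in>{1..n}. \<forall>j\<in>{1..n}. i \<noteq> j \<longrightarrow>
      \<not> right_module_iso {e i * a | a. True} {e j * a | a. True})"

definition corner :: "(nat \<Rightarrow> 'a::ring_1) \<Rightarrow> nat \<Rightarrow> nat \<Rightarrow> 'a set \<Rightarrow> 'a set" where
  "corner e j i S = {e j * x * e i | x. x \<in> S}"

definition rad_sq :: "('k::field \<Rightarrow> 'a::ring_1 \<Rightarrow> 'a) \<Rightarrow> 'a set" where
  "rad_sq scale = module.span scale {x * y | x y. x \<in> rad \<and> y \<in> rad}"

text \<open>A quiver has vertices Q0 = {1..n}, arrows Q1 with source s and target t.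
  A path is given by its start vertex and its list of arrows in order of traversal.\<close>
fun path_from :: "'q set \<Rightarrow> ('q \<Rightarrow> nat) \<Rightarrow> ('q \<Rightarrow> nat) \<Rightarrow> nat \<Rightarrow> 'q list \<Rightarrow> nat \<Rightarrow> bool" where
  "path_from Q1 s t x [] y \<longleftrightarrow> x = y"
| "path_from Q1 s t x (\<alpha> # ps) y \<longleftrightarrow> \<alpha> \<in> Q1 \<and> s \<alpha> = x \<and> path_from Q1 s t (t \<alpha>) ps y"

definition ordinary_quiver ::
  "('k::field \<Rightarrow> 'a::ring_1 \<Rightarrow> 'a) \<Rightarrow> nat \<Rightarrow> (nat \<Rightarrow> 'a) \<Rightarrow> 'q set \<Rightarrow> ('q \<Rightarrow> nat) \<Rightarrow> ('q \<Rightarrow> nat) \<Rightarrow> bool" where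
  "ordinary_quiver scale n e Q1 s t \<longleftrightarrow> finite Q1 \<and>
     (\<forall>\<alpha>\<in>Q1. s \<alpha> \<in> {1..n} \<and> t \<alpha> \<in> {1..n}) \<and>
     (\<forall>i\<in>{1..n}. \<forall>j\<in>{1..n}. card {\<alpha>\<in>Q1. s \<alpha> = i \<and> t \<alpha> = j} =
        vector_space.dim scale (corner e j i rad) - vector_space.dim scale (corner e j i (rad_sq scale)))"

definition no_oriented_cycles :: "nat \<Rightarrow> 'q set \<Rightarrow> ('q \<Rightarrow> nat) \<Rightarrow> ('q \<Rightarrow> nat) \<Rightarrow> bool" where
  "no_oriented_cycles n Q1 s t \<longleftrightarrow> (\<forall>x\<in>{1..n}. \<forall>ps. path_from Q1 s t x ps x \<longrightarrow> ps = [])"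

text \<open>Walks: lists of steps (arrow, True) = arrow, (arrow, False) = formal inverse,
  in order of traversal.\<close>
fun walk_from :: "'q set \<Rightarrow> ('q \<Rightarrow> nat) \<Rightarrow> ('q \<Rightarrow> nat) \<Rightarrow> nat \<Rightarrow> ('q \<times> bool) list \<Rightarrow> nat \<Rightarrow> bool" where
  "walk_from Q1 s t x [] y \<longleftrightarrow> x = y"
| "walk_from Q1 s t x ((\<alpha>, b) # w) y \<longleftrightarrow> \<alpha> \<in> Q1 \<and>
     (if b then s \<alpha> = x \<and> walk_from Q1 s t (t \<alpha>) w y
           else t \<alpha> = x \<and> walk_from Q1 s t (s \<alpha>) w y)"

definition path_walk :: "'q list \<Rightarrow> ('q \<times> bool) list" where
  "path_walk ps = map (\<lambda>\<alpha>. (\<alpha>, True)) ps"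

definition walk_inv :: "('q \<times> bool) list \<Rightarrow> ('q \<times> bool) list" where
  "walk_inv w = rev (map (\<lambda>(\<alpha>, b). (\<alpha>, \<not> b)) w)"

definition reduced_walk :: "('q \<times> bool) list \<Rightarrow> bool" where
  "reduced_walk w \<longleftrightarrow> (\<forall>i. Suc i < length w \<longrightarrow>
      \<not> (fst (w ! i) = fst (w ! Suc i) \<and> snd (w ! i) \<noteq> snd (w ! Suc i)))"

definition maximal_tree :: "nat \<Rightarrow> 'q set \<Rightarrow> ('q \<Rightarrow> nat) \<Rightarrow> ('q \<Rightarrow> nat) \<Rightarrow> 'q set \<Rightarrow> bool" where
  "maximal_tree n Q1 s t T \<longleftrightarrow> T \<subseteq> Q1 \<and>
     (\<forall>x\<in>{1..n}. \<forall>y\<in>{1..n}. \<exists>w. walk_from T s t x w y) \<and>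
     (\<forall>x\<in>{1..n}. \<forall>w. walk_from T s t x w x \<and> reduced_walk w \<longrightarrow> w = [])"

text \<open>Image in A of a path under the algebra map determined by \<phi> on arrows
  (with e_x \<mapsto> e_x): the path \<alpha>_1 ... \<alpha>_m (traversal order) maps to \<phi> \<alpha>_m \<cdots> \<phi> \<alpha>_1.\<close>
definition path_val :: "(nat \<Rightarrow> 'a::ring_1) \<Rightarrow> ('q \<Rightarrow> 'a) \<Rightarrow> nat \<Rightarrow> 'q list \<Rightarrow> 'a" where
  "path_val e \<phi> x ps = (if ps = [] then e x else foldl (\<lambda>acc \<alpha>. \<phi> \<alpha> * acc) 1 ps)"

definition is_path :: "nat \<Rightarrow> 'q set \<Rightarrow> ('q \<Rightarrow> nat) \<Rightarrow> ('q \<Rightarrow> nat) \<Rightarrow> nat \<times> 'q list \<Rightarrow> bool" where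
  "is_path n Q1 s t p \<longleftrightarrow> fst p \<in> {1..n} \<and> (\<exists>y. path_from Q1 s t (fst p) (snd p) y)"

text \<open>Elements of kQ: finitely supported k-linear combinations of paths.\<close>
definition pa_elem :: "nat \<Rightarrow> 'q set \<Rightarrow> ('q \<Rightarrow> nat) \<Rightarrow> ('q \<Rightarrow> nat) \<Rightarrow> (nat \<times> 'q list \<Rightarrow> 'k::field) \<Rightarrow> bool" where
  "pa_elem n Q1 s t \<rho> \<longleftrightarrow> finite {p. \<rho> p \<noteq> 0} \<and> (\<forall>p. \<rho> p \<noteq> 0 \<longrightarrow> is_path n Q1 s t p)"

definition arrow_ideal_pow :: "nat \<Rightarrow> 'q set \<Rightarrow> ('q \<Rightarrow> nat) \<Rightarrow> ('q \<Rightarrow> nat) \<Rightarrow> nat \<Rightarrow> (nat \<times> 'q list \<Rightarrow> 'k::field) set" where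
  "arrow_ideal_pow n Q1 s t m = {\<rho>. pa_elem n Q1 s t \<rho> \<and> (\<forall>p. \<rho> p \<noteq> 0 \<longrightarrow> length (snd p) \<ge> m)}"

definition pa_map :: "('k::field \<Rightarrow> 'a::ring_1 \<Rightarrow> 'a) \<Rightarrow> (nat \<Rightarrow> 'a) \<Rightarrow> ('q \<Rightarrow> 'a) \<Rightarrow> (nat \<times> 'q list \<Rightarrow> 'k) \<Rightarrow> 'a" where
  "pa_map scale e \<phi> \<rho> = (\<Sum>p\<in>{p. \<rho> p \<noteq> 0}. scale (\<rho> p) (path_val e \<phi> (fst p) (snd p)))"

definition pa_kernel :: "nat \<Rightarrow> 'q set \<Rightarrow> ('q \<Rightarrow> nat) \<Rightarrow> ('q \<Rightarrow> nat) \<Rightarrow> ('k::field \<Rightarrow> 'a::ring_1 \<Rightarrow> 'a) \<Rightarrow> (nat \<Rightarrow> 'a) \<Rightarrow> ('q \<Rightarrow> 'a) \<Rightarrow> (nat \<times> 'q list \<Rightarrow> 'k) set" where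
  "pa_kernel n Q1 s t scale e \<phi> = {\<rho>. pa_elem n Q1 s t \<rho> \<and> pa_map scale e \<phi> \<rho> = 0}"

text \<open>A presentation \<nu> : kQ \<rightarrow> A with \<nu>(e_i) = e_i is determined by its values \<phi> on arrows;
  \<nu> is an algebra map iff \<phi> \<alpha> \<in> e_{t \<alpha>} A e_{s \<alpha>}.\<close>
definition presentation :: "nat \<Rightarrow> 'q set \<Rightarrow> ('q \<Rightarrow> nat) \<Rightarrow> ('q \<Rightarrow> nat) \<Rightarrow> ('k::field \<Rightarrow> 'a::ring_1 \<Rightarrow> 'a) \<Rightarrow> (nat \<Rightarrow> 'a) \<Rightarrow> ('q \<Rightarrow> 'a) \<Rightarrow> bool" where
  "presentation n Q1 s t scale e \<phi> \<longleftrightarrow>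
     (\<forall>\<alpha>\<in>Q1. \<phi> \<alpha> = e (t \<alpha>) * \<phi> \<alpha> * e (s \<alpha>)) \<and>
     (\<forall>a. \<exists>\<rho>. pa_elem n Q1 s t \<rho> \<and> pa_map scale e \<phi> \<rho> = a) \<and>
     (\<exists>N\<ge>2. arrow_ideal_pow n Q1 s t N \<subseteq> pa_kernel n Q1 s t scale e \<phi> \<and>
            pa_kernel n Q1 s t scale e \<phi> \<subseteq> arrow_ideal_pow n Q1 s t 2)"

definition minimal_relation :: "nat \<Rightarrow> 'q set \<Rightarrow> ('q \<Rightarrow> nat) \<Rightarrow> ('q \<Rightarrow> nat) \<Rightarrow> ('k::field \<Rightarrow> 'a::ring_1 \<Rightarrow> 'a) \<Rightarrow> (nat \<Rightarrow> 'a) \<Rightarrow> ('q \<Rightarrow> 'a) \<Rightarrow> (nat \<times> 'q list \<Rightarrow> 'k) \<Rightarrow> bool" where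
  "minimal_relation n Q1 s t scale e \<phi> \<rho> \<longleftrightarrow>
     \<rho> \<in> pa_kernel n Q1 s t scale e \<phi> \<and> {p. \<rho> p \<noteq> 0} \<noteq> {} \<and>
     (\<forall>S. S \<subseteq> {p. \<rho> p \<noteq> 0} \<and> S \<noteq> {} \<and> S \<noteq> {p. \<rho> p \<noteq> 0} \<longrightarrow>
        (\<lambda>p. if p \<in> S then \<rho> p else 0) \<notin> pa_kernel n Q1 s t scale e \<phi>)"

inductive walk_rel :: "nat \<Rightarrow> 'q set \<Rightarrow> ('q \<Rightarrow> nat) \<Rightarrow> ('q \<Rightarrow> nat) \<Rightarrow> ('k::field \<Rightarrow> 'a::ring_1 \<Rightarrow> 'a) \<Rightarrow> (nat \<Rightarrow> 'a) \<Rightarrow> ('q \<Rightarrow> 'a)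
    \<Rightarrow> nat \<times> ('q \<times> bool) list \<Rightarrow> nat \<times> ('q \<times> bool) list \<Rightarrow> bool"
  for n Q1 s t scale e \<phi> where
  refl: "x \<in> {1..n} \<Longrightarrow> walk_from Q1 s t x w y \<Longrightarrow> walk_rel n Q1 s t scale e \<phi> (x, w) (x, w)"
| sym: "walk_rel n Q1 s t scale e \<phi> a b \<Longrightarrow> walk_rel n Q1 s t scale e \<phi> b a"
| trans: "walk_rel n Q1 s t scale e \<phi> a b \<Longrightarrow> walk_rel n Q1 s t scale e \<phi> b c \<Longrightarrow> walk_rel n Q1 s t scale e \<phi> a c"
| cancel_right: "\<alpha> \<in> Q1 \<Longrightarrow> walk_rel n Q1 s t scale e \<phi> (t \<alpha>, [(\<alpha>, False), (\<alpha>, True)]) (t \<alpha>, [])"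
| cancel_left: "\<alpha> \<in> Q1 \<Longrightarrow> walk_rel n Q1 s t scale e \<phi> (s \<alpha>, [(\<alpha>, True), (\<alpha>, False)]) (s \<alpha>, [])"
| minrel: "minimal_relation n Q1 s t scale e \<phi> \<rho> \<Longrightarrow> \<rho> (x, ps) \<noteq> 0 \<Longrightarrow> \<rho> (x', qs) \<noteq> 0 \<Longrightarrow>
      walk_rel n Q1 s t scale e \<phi> (x, path_walk ps) (x', path_walk qs)"
| concat: "walk_rel n Q1 s t scale e \<phi> (x, w1) (x, w2) \<Longrightarrow> walk_from Q1 s t x w1 y \<Longrightarrow> walk_from Q1 s t x w2 y \<Longrightarrow>
      walk_from Q1 s t x' u x \<Longrightarrow> walk_from Q1 s t y v y' \<Longrightarrow>
      walk_rel n Q1 s t scale e \<phi> (x', u @ w1 @ v) (x', u @ w2 @ v)"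

text \<open>A group homomorphism \<pi>_1(Q,I) \<rightarrow> k^+, represented as a function on closed walks at x0
  which is constant on \<sim>_I-classes and additive with respect to concatenation.\<close>
definition pi1_hom :: "nat \<Rightarrow> 'q set \<Rightarrow> ('q \<Rightarrow> nat) \<Rightarrow> ('q \<Rightarrow> nat) \<Rightarrow> ('k::field \<Rightarrow> 'a::ring_1 \<Rightarrow> 'a) \<Rightarrow> (nat \<Rightarrow> 'a) \<Rightarrow> ('q \<Rightarrow> 'a)
    \<Rightarrow> nat \<Rightarrow> (('q \<times> bool) list \<Rightarrow> 'k) \<Rightarrow> bool" where
  "pi1_hom n Q1 s t scale e \<phi> x0 f \<longleftrightarrow>
     (\<forall>w1 w2. walk_from Q1 s t x0 w1 x0 \<and> walk_from Q1 s t x0 w2 x0 \<and>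
        walk_rel n Q1 s t scale e \<phi> (x0, w1) (x0, w2) \<longrightarrow> f w1 = f w2) \<and>
     (\<forall>w1 w2. walk_from Q1 s t x0 w1 x0 \<and> walk_from Q1 s t x0 w2 x0 \<longrightarrow> f (w1 @ w2) = f w1 + f w2)"

definition Der0 :: "('k::field \<Rightarrow> 'a::ring_1 \<Rightarrow> 'a) \<Rightarrow> nat \<Rightarrow> (nat \<Rightarrow> 'a) \<Rightarrow> ('a \<Rightarrow> 'a) set" where
  "Der0 scale n e = {d. (\<forall>a b. d (a + b) = d a + d b) \<and> (\<forall>c a. d (scale c a) = scale c (d a)) \<and>
       (\<forall>a b. d (a * b) = d a * b + a * d b) \<and> (\<forall>i\<in>{1..n}. d (e i) = 0)}"

definition Int0 :: "('k::field \<Rightarrow> 'a::ring_1 \<Rightarrow> 'a) \<Rightarrow> nat \<Rightarrow> (nat \<Rightarrow> 'a) \<Rightarrow> ('a \<Rightarrow> 'a) set" where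
  "Int0 scale n e = {(\<lambda>a. x * a - a * x) | x. x \<in> module.span scale (e ` {1..n})}"

definition hh_class :: "('k::field \<Rightarrow> 'a::ring_1 \<Rightarrow> 'a) \<Rightarrow> nat \<Rightarrow> (nat \<Rightarrow> 'a) \<Rightarrow> ('a \<Rightarrow> 'a) \<Rightarrow> ('a \<Rightarrow> 'a) set" where
  "hh_class scale n e d = {d' \<in> Der0 scale n e. (\<lambda>a. d' a - d a) \<in> Int0 scale n e}"

text \<open>HH^1(A) = Der_0(A)/Int_0(A), elements are cosets.\<close>
definition HH1 :: "('k::field \<Rightarrow> 'a::ring_1 \<Rightarrow> 'a) \<Rightarrow> nat \<Rightarrow> (nat \<Rightarrow> 'a) \<Rightarrow> ('a \<Rightarrow> 'a) set set" where
  "HH1 scale n e = hh_class scale n e ` Der0 scale n e"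

definition algebra_basis :: "('k::field \<Rightarrow> 'a::ring_1 \<Rightarrow> 'a) \<Rightarrow> nat \<Rightarrow> (nat \<Rightarrow> 'a) \<Rightarrow> 'a set \<Rightarrow> bool" where
  "algebra_basis scale n e B \<longleftrightarrow> \<not> module.dependent scale B \<and> module.span scale B = UNIV \<and>
     (\<forall>b\<in>B. \<exists>i\<in>{1..n}. \<exists>j\<in>{1..n}. b \<in> corner e j i UNIV) \<and>
     e ` {1..n} \<subseteq> B \<and> B - e ` {1..n} \<subseteq> rad"

definition diagonalizable :: "('k::field \<Rightarrow> 'a::ring_1 \<Rightarrow> 'a) \<Rightarrow> nat \<Rightarrow> (nat \<Rightarrow> 'a) \<Rightarrow> ('a \<Rightarrow> 'a) set set \<Rightarrow> bool" where
  "diagonalizable scale n e D \<longleftrightarrow> (\<exists>B. algebra_basis scale n e B \<and>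
     (\<forall>c\<in>D. \<exists>d\<in>c. \<forall>b\<in>B. \<exists>c. d b = scale c b))"

text \<open>Image of \<theta>_\<nu> : Hom(\<pi>_1(Q,I), k^+) \<rightarrow> HH^1(A), relative to base point x0 and
  walks \<gamma> x (minimal walks in the maximal tree from x0 to x).\<close>
definition theta_image :: "nat \<Rightarrow> 'q set \<Rightarrow> ('q \<Rightarrow> nat) \<Rightarrow> ('q \<Rightarrow> nat) \<Rightarrow> ('k::field \<Rightarrow> 'a::ring_1 \<Rightarrow> 'a) \<Rightarrow> (nat \<Rightarrow> 'a) \<Rightarrow> ('q \<Rightarrow> 'a)
    \<Rightarrow> nat \<Rightarrow> (nat \<Rightarrow> ('q \<times> bool) list) \<Rightarrow> ('a \<Rightarrow> 'a) set set" where
  "theta_image n Q1 s t scale e \<phi> x0 \<gamma> =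
     {c. \<exists>f. pi1_hom n Q1 s t scale e \<phi> x0 f \<and> (\<exists>d\<in>Der0 scale n e. c = hh_class scale n e d \<and>
        (\<forall>x y ps. x \<in> {1..n} \<and> path_from Q1 s t x ps y \<longrightarrow>
           d (path_val e \<phi> x ps) = scale (f (\<gamma> x @ path_walk ps @ walk_inv (\<gamma> y))) (path_val e \<phi> x ps)))}"

end

(*
  Given a basis B diagonalising D, choose the images of the arrows i -> j in e_j B e_i so that
  they complete a basis of e_j r^2 e_i to one of e_j r e_i: the ordinary quiver has exactly the
  right number of arrows for this, and nilpotency of the radical r makes the resulting map
  kQ -> A a presentation. A derivation diagonal on B then has every path as an eigenvector, with
  eigenvalue the sum of the eigenvalues of its arrows. Since eigenvectors for distinct
  eigenvalues are independent, these weights are constant on every minimal relation, so they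
  define a homomorphism pi_1(Q, I) -> k^+ whose image under theta is the class of the
  derivation, after correcting it by an inner derivation with respect to a combination of the e_i.
  Conversely, the derivations representing classes in the image of theta act diagonally on the
  images of the paths, and these span A, so a basis extracted from them diagonalises D.
*)
theory Submission
  imports Defs
begin

section \<open>Linear algebra\<close>

lemma (in vector_space) independent_Un_sum_in_span:
  assumes ind: "independent (A \<union> K)" and fin: "finite (A \<union> K)" and AK: "A \<inter> K = {}"
    and u: "(\<Sum>a\<in>A. scale (u a) a) \<in> span K"
  shows "\<forall>a\<in>A. u a = 0"
proof -
  have fA: "finite A" and fK: "finite K" using fin by auto
  obtain c where c: "(\<Sum>a\<in>A. scale (u a) a) = (\<Sum>k\<in>K. scale (c k) k)"
    using u span_finite[OF fK] by blast
  define U where "U v = (if v \<in> A then u v else - c v)" for v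
  have "(\<Sum>v\<in>A \<union> K. scale (U v) v) = (\<Sum>a\<in>A. scale (u a) a) - (\<Sum>k\<in>K. scale (c k) k)"
    unfolding U_def using AK fA fK
    by (simp add: sum.union_disjoint sum_negf[symmetric] cong: sum.cong) (auto intro!: sum.cong)
  then have "\<forall>v\<in>A \<union> K. U v = 0" using c independentD[OF ind fin subset_refl] by simp
  then show ?thesis unfolding U_def by (metis UnI1)
qed

lemma (in vector_space) exists_complement_mod_subspace:
  assumes G: "finite G" and W: "subspace W" "W \<subseteq> span G"
  obtains A where "card A = dim (span G) - dim W" "A \<subseteq> G"
    "span G \<subseteq> {a + w | a w. a \<in> span A \<and> w \<in> W}"
    "\<And>u. (\<Sum>a\<in>A. scale (u a) a) \<in> W \<Longrightarrow> \<forall>a\<in>A. u a = 0"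
proof -
  obtain K where K: "K \<subseteq> W" "independent K" "W \<subseteq> span K" "card K = dim W"
    by (rule basis_exists[of W])
  obtain B where B: "K \<subseteq> B" "B \<subseteq> K \<union> G" "independent B" "K \<union> G \<subseteq> span B"
    using maximal_independent_subset_extend[of K "K \<union> G"] K(2) by blast
  have BG: "B \<subseteq> span G" using B(2) K(1) W(2) span_superset by blast
  have fB: "finite B" using independent_span_bound[OF G B(3) BG] by blast
  have fK: "finite K" using finite_subset[OF B(1) fB] .
  define A where "A = B - K"
  have BAK: "B = A \<union> K" and AK: "A \<inter> K = {}"
    unfolding A_def using B(1) by auto
  have "card B = dim (span G)"
    by (rule basis_card_eq_dim[OF BG]) (use B(3,4) span_minimal in auto)
  then have "card A = dim (span G) - dim W"
    unfolding A_def using card_Diff_subset[OF fK B(1)] K(4) by simp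
  moreover have "A \<subseteq> G" unfolding A_def using B(2) by blast
  moreover have "span G \<subseteq> {a + w | a w. a \<in> span A \<and> w \<in> W}"
  proof
    fix x assume "x \<in> span G"
    then have "x \<in> span (A \<union> K)" using B(4) span_minimal[of G "span B"] BAK by auto
    then obtain a k where "x = a + k" "a \<in> span A" "k \<in> span K" unfolding span_Un by blast
    moreover have "span K \<subseteq> W" by (rule span_minimal[OF K(1) W(1)])
    ultimately show "x \<in> {a + w | a w. a \<in> span A \<and> w \<in> W}" by blast
  qed
  moreover have "\<forall>a\<in>A. u a = 0" if "(\<Sum>a\<in>A. scale (u a) a) \<in> W" for u
    using independent_Un_sum_in_span[of A K u] B(3) fB AK K(3) that unfolding BAK by blast
  ultimately show thesis by (rule that)
qed

lemma (in vector_space) eigenvectors_sum_eq_0: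
  assumes d: "Vector_Spaces.linear scale scale d" and M: "finite M"
    and eig: "\<And>\<mu>. \<mu> \<in> M \<Longrightarrow> d (w \<mu>) = scale \<mu> (w \<mu>)" and sum0: "(\<Sum>\<mu>\<in>M. w \<mu>) = 0"
  shows "\<forall>\<mu>\<in>M. w \<mu> = 0"
  using M eig sum0
proof (induction M arbitrary: w rule: finite_induct)
  case (insert m M)
  interpret d: Vector_Spaces.linear scale scale d by (rule d)
  \<comment> \<open>Applying d - m kills the m-component and keeps the others as eigenvectors.\<close>
  define w' where "w' \<mu> = scale (\<mu> - m) (w \<mu>)" for \<mu>
  have "d (w' \<mu>) = scale \<mu> (w' \<mu>)" if "\<mu> \<in> M" for \<mu>
    using insert.prems(1) that by (simp add: w'_def d.scale scale_left_commute)
  moreover have "(\<Sum>\<mu>\<in>M. w' \<mu>) = 0"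
  proof -
    have rest: "(\<Sum>\<mu>\<in>M. w \<mu>) = - w m"
      using insert by (simp add: eq_neg_iff_add_eq_0 add.commute)
    have "(\<Sum>\<mu>\<in>M. w' \<mu>) = (\<Sum>\<mu>\<in>M. d (w \<mu>)) - scale m (\<Sum>\<mu>\<in>M. w \<mu>)"
      using insert.prems(1) by (simp add: w'_def scale_left_diff_distrib sum_subtractf scale_sum_right)
    also have "\<dots> = d (- w m) - scale m (- w m)" by (simp only: d.sum[symmetric] rest)
    also have "\<dots> = 0" using insert.prems(1) by (simp add: d.neg)
    finally show ?thesis .
  qed
  ultimately have "\<forall>\<mu>\<in>M. w' \<mu> = 0" by (rule insert.IH)
  then have "\<forall>\<mu>\<in>M. w \<mu> = 0" using insert.hyps(2) by (auto simp: w'_def)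
  then show ?case using insert.prems(2) insert.hyps by simp
qed simp

lemma (in vector_space) eigenvector_groups_sum_eq_0:
  assumes d: "Vector_Spaces.linear scale scale d" and F: "finite F"
    and eig: "\<And>p. p \<in> F \<Longrightarrow> d (v p) = scale (L p) (v p)" and sum0: "(\<Sum>p\<in>F. v p) = 0"
  shows "(\<Sum>p\<in>{p\<in>F. L p = \<mu>}. v p) = 0"
proof -
  interpret d: Vector_Spaces.linear scale scale d by (rule d)
  define W where "W \<mu> = (\<Sum>p\<in>{p\<in>F. L p = \<mu>}. v p)" for \<mu>
  have "d (W \<mu>) = scale \<mu> (W \<mu>)" for \<mu>
    unfolding W_def using eig by (simp add: d.sum scale_sum_right)
  moreover have "(\<Sum>\<mu>\<in>L ` F. W \<mu>) = 0"
    using sum.image_gen[OF F, of v L] sum0 unfolding W_def by simp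
  ultimately have "\<forall>\<mu>\<in>L ` F. W \<mu> = 0" using eigenvectors_sum_eq_0[OF d] F by blast
  moreover have "W \<mu> = 0" if "\<mu> \<notin> L ` F" unfolding W_def using that by (auto intro: sum.neutral)
  ultimately show ?thesis unfolding W_def by blast
qed

section \<open>The Jacobson radical\<close>

lemma one_diff_power_eq_ring_1: "(1 - x) * (\<Sum>i<n. x ^ i) = 1 - (x::'a::ring_1) ^ n"
proof (induction n)
  case (Suc n)
  have "(1 - x) * (\<Sum>i<Suc n. x ^ i) = (1 - x) * (\<Sum>i<n. x ^ i) + (1 - x) * x ^ n"
    by (simp add: distrib_left)
  also have "\<dots> = 1 - x ^ Suc n"
    using Suc by (simp add: left_diff_distrib)
  finally show ?case .
qed simp

lemma right_ideal_rad: "right_ideal (rad :: 'a::ring_1 set)"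
proof -
  have "right_ideal M" if "M \<in> {M. maximal_right_ideal M}" for M :: "'a set"
    using that unfolding maximal_right_ideal_def by blast
  then show ?thesis
    unfolding rad_def right_ideal_def by blast
qed

lemma zero_in_rad: "0 \<in> rad"
  and rad_add: "x \<in> rad \<Longrightarrow> y \<in> rad \<Longrightarrow> x + y \<in> rad"
  and rad_uminus: "x \<in> rad \<Longrightarrow> - x \<in> rad"
  and rad_mult_right: "x \<in> rad \<Longrightarrow> x * y \<in> rad"
  using right_ideal_rad unfolding right_ideal_def by blast+

lemma rad_diff: "x \<in> rad \<Longrightarrow> y \<in> rad \<Longrightarrow> x - y \<in> rad"
  using rad_add rad_uminus by (metis diff_conv_add_uminus)

lemma right_ideal_eq_UNIV: "right_ideal M \<Longrightarrow> 1 \<in> M \<Longrightarrow> M = UNIV"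
  unfolding right_ideal_def by (metis UNIV_eq_I mult_1)

lemma right_ideal_Union_chain:
  assumes C: "C \<noteq> {}" "\<And>c. c \<in> C \<Longrightarrow> right_ideal c" "\<And>c d. c \<in> C \<Longrightarrow> d \<in> C \<Longrightarrow> c \<subseteq> d \<or> d \<subseteq> c"
  shows "right_ideal (\<Union>C)"
  unfolding right_ideal_def
proof (intro conjI ballI allI)
  show "0 \<in> \<Union>C" using C(1,2) unfolding right_ideal_def by blast
next
  fix x y assume "x \<in> \<Union>C" "y \<in> \<Union>C"
  then obtain c d where cd: "c \<in> C" "d \<in> C" "x \<in> c" "y \<in> d" by blast
  show "x + y \<in> \<Union>C"
    using C(3)[OF cd(1,2)] C(2)[OF cd(1)] C(2)[OF cd(2)] cd unfolding right_ideal_def by blast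
next
  fix x a assume "x \<in> \<Union>C"
  then show "- x \<in> \<Union>C" "x * a \<in> \<Union>C" using C(2) unfolding right_ideal_def by blast+
qed

lemma exists_maximal_right_ideal:
  fixes I :: "'a::ring_1 set"
  assumes I: "right_ideal I" and one: "1 \<notin> I"
  obtains M where "maximal_right_ideal M" "I \<subseteq> M"
proof -
  let ?A = "{N. right_ideal N \<and> I \<subseteq> N \<and> 1 \<notin> N}"
  have "\<exists>M\<in>?A. \<forall>X\<in>?A. M \<subseteq> X \<longrightarrow> X = M"
  proof (rule subset_Zorn_nonempty)
    show "?A \<noteq> {}" using I one by blast
  next
    fix C assume C: "C \<noteq> {}" "subset.chain ?A C"
    then have "right_ideal (\<Union>C)"
      by (intro right_ideal_Union_chain) (auto simp: subset.chain_def)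
    with C show "\<Union>C \<in> ?A" unfolding subset.chain_def by blast
  qed
  then obtain M where M: "right_ideal M" "I \<subseteq> M" "1 \<notin> M"
    and max: "\<forall>X\<in>?A. M \<subseteq> X \<longrightarrow> X = M" by blast
  have "maximal_right_ideal M"
    unfolding maximal_right_ideal_def
  proof (intro conjI allI impI)
    show "right_ideal M" "M \<noteq> UNIV" using M by auto
  next
    fix N assume N: "right_ideal N \<and> M \<subseteq> N \<and> N \<noteq> UNIV"
    then have "1 \<notin> N" using right_ideal_eq_UNIV by blast
    then show "N = M" using max N M(2) by auto
  qed
  then show thesis using M(2) by (rule that)
qed

lemma right_ideal_add_principal:
  assumes M: "right_ideal M" shows "right_ideal {m + x * a | m a. m \<in> M}"
  unfolding right_ideal_def
proof (intro conjI ballI allI)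
  show "0 \<in> {m + x * a | m a. m \<in> M}"
    using M unfolding right_ideal_def by (metis (mono_tags) add_0 mem_Collect_eq mult_zero_right)
next
  fix u v assume "u \<in> {m + x * a | m a. m \<in> M}" "v \<in> {m + x * a | m a. m \<in> M}"
  then obtain m1 a1 m2 a2 where "u = m1 + x * a1" "v = m2 + x * a2" "m1 \<in> M" "m2 \<in> M" by blast
  then have "u + v = (m1 + m2) + x * (a1 + a2)" "m1 + m2 \<in> M"
    using M unfolding right_ideal_def by (auto simp: distrib_left add_ac)
  then show "u + v \<in> {m + x * a | m a. m \<in> M}" by blast
next
  fix u b assume "u \<in> {m + x * a | m a. m \<in> M}"
  then obtain m1 a1 where u: "u = m1 + x * a1" "m1 \<in> M" by blast
  then have "- u = (- m1) + x * (- a1)" "- m1 \<in> M"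
    using M unfolding right_ideal_def by auto
  then show "- u \<in> {m + x * a | m a. m \<in> M}" by blast
  have "u * b = m1 * b + x * (a1 * b)" "m1 * b \<in> M"
    using u M unfolding right_ideal_def by (auto simp: distrib_right mult.assoc)
  then show "u * b \<in> {m + x * a | m a. m \<in> M}" by blast
qed

lemma rad_one_diff_right_invertible:
  assumes x: "x \<in> rad" obtains u where "(1 - x) * u = 1"
proof (rule ccontr)
  assume no_inverse: "\<not> thesis"
  let ?I = "{m + (1 - x) * a | m a. m \<in> {0}}"
  have "right_ideal ?I" by (rule right_ideal_add_principal) (simp add: right_ideal_def)
  moreover have "1 \<notin> ?I" using no_inverse that by auto
  ultimately obtain M where M: "maximal_right_ideal M" "?I \<subseteq> M"
    by (rule exists_maximal_right_ideal)
  have "1 - x \<in> ?I" by (force intro: exI[of _ 0] exI[of _ 1])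
  then have "1 - x \<in> M" using M(2) by blast
  moreover have "right_ideal M" using M(1) unfolding maximal_right_ideal_def by blast
  moreover have "x \<in> M" using x M(1) unfolding rad_def by blast
  ultimately have "1 \<in> M" unfolding right_ideal_def by (metis diff_add_cancel)
  then show False using M(1) right_ideal_eq_UNIV maximal_right_ideal_def by blast
qed

lemma rad_one_diff_left_invertible:
  assumes x: "x \<in> rad" obtains v where "v * (1 - x) = 1"
proof -
  obtain u where u: "(1 - x) * u = 1" using rad_one_diff_right_invertible[OF x] .
  then have "u = 1 - (- (x * u))" by (simp add: algebra_simps)
  moreover have "- (x * u) \<in> rad" using x rad_mult_right rad_uminus by blast
  ultimately obtain v where v: "u * v = 1" using rad_one_diff_right_invertible by metis
  have "1 - x = (1 - x) * (u * v)" using v by simp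
  also have "\<dots> = v" using u by (simp add: mult.assoc[symmetric])
  finally show thesis using v that by metis
qed

lemma in_rad_if_one_diff_right_invertible:
  fixes x :: "'a::ring_1"
  assumes inv: "\<And>a. \<exists>u. (1 - x * a) * u = 1"
  shows "x \<in> rad"
  unfolding rad_def
proof
  fix M :: "'a set" assume "M \<in> {M. maximal_right_ideal M}"
  then have M: "maximal_right_ideal M" by simp
  then have RM: "right_ideal M" unfolding maximal_right_ideal_def by blast
  show "x \<in> M"
  proof (rule ccontr)
    assume xM: "x \<notin> M"
    let ?N = "{m + x * a | m a. m \<in> M}"
    have "right_ideal ?N" using RM by (rule right_ideal_add_principal)
    moreover have "M \<subseteq> ?N" by (force intro: exI[of _ 0])
    moreover have "x \<in> ?N"
      using RM unfolding right_ideal_def by (force intro: exI[of _ 1])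
    ultimately have "?N = UNIV" using M xM unfolding maximal_right_ideal_def by blast
    then obtain m a where ma: "1 = m + x * a" "m \<in> M" by blast
    then have "m = 1 - x * a" by (simp add: algebra_simps)
    with inv obtain u where "m * u = 1" by blast
    then have "1 \<in> M" using ma(2) RM unfolding right_ideal_def by metis
    then show False using M right_ideal_eq_UNIV RM unfolding maximal_right_ideal_def by blast
  qed
qed

lemma rad_mult_left:
  assumes x: "x \<in> rad" shows "b * x \<in> rad"
proof (rule in_rad_if_one_diff_right_invertible)
  fix a
  obtain u where u: "(1 - x * (a * b)) * u = 1"
    using rad_one_diff_right_invertible x rad_mult_right by blast
  \<comment> \<open>Kaplansky's trick: if 1 - xy is invertible, so is 1 - yx.\<close>
  have "(1 - b * x * a) * (1 + b * u * (x * a)) = 1 - b * x * a + b * ((1 - x * (a * b)) * u) * (x * a)"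
    by (simp add: algebra_simps)
  also have "\<dots> = 1" using u by (simp add: mult.assoc)
  finally show "\<exists>u. (1 - b * x * a) * u = 1" by blast
qed

lemma idempotent_notin_rad:
  assumes "f * f = f" "f \<noteq> 0" shows "f \<notin> rad"
proof
  assume "f \<in> rad"
  then obtain u where "(1 - f) * u = 1" by (rule rad_one_diff_right_invertible)
  then have "f * ((1 - f) * u) = f" by simp
  then show False using assms by (simp add: algebra_simps mult.assoc[symmetric])
qed

lemma in_rad_if_right_nilpotent:
  assumes nil: "\<And>a. \<exists>N. (x * a) ^ N = 0" shows "x \<in> rad"
proof (rule in_rad_if_one_diff_right_invertible)
  fix a
  obtain N where "(x * a) ^ N = 0" using nil by blast
  then have "(1 - x * a) * (\<Sum>i<N. (x * a) ^ i) = 1"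
    using one_diff_power_eq_ring_1[of "x * a" N] by simp
  then show "\<exists>u. (1 - x * a) * u = 1" by blast
qed

definition left_comb :: "'a::ring_1 set \<Rightarrow> 'a set \<Rightarrow> 'a set" where
  "left_comb G Z = {\<Sum>g\<in>G. r g * g | r. \<forall>g. r g \<in> Z}"

lemma left_combI: "(\<And>g. r g \<in> Z) \<Longrightarrow> x = (\<Sum>g\<in>G. r g * g) \<Longrightarrow> x \<in> left_comb G Z"
  unfolding left_comb_def by blast

lemma left_comb_rad_eliminate:
  assumes G: "finite G" "g0 \<notin> G" and g0: "g0 \<in> left_comb G rad"
    and x: "x \<in> left_comb (insert g0 G) rad"
  shows "x \<in> left_comb G rad"
proof -
  obtain b where b: "g0 = (\<Sum>g\<in>G. b g * g)" "\<forall>g. b g \<in> rad"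
    using g0 unfolding left_comb_def by blast
  obtain a where a: "x = (\<Sum>g\<in>insert g0 G. a g * g)" "\<forall>g. a g \<in> rad"
    using x unfolding left_comb_def by blast
  have "x = a g0 * g0 + (\<Sum>g\<in>G. a g * g)" using a(1) G by simp
  also have "\<dots> = (\<Sum>g\<in>G. (a g0 * b g + a g) * g)"
    by (simp add: b(1) sum_distrib_left sum.distrib distrib_right mult.assoc)
  finally show ?thesis
    by (rule left_combI[rotated]) (use a(2) b(2) rad_add rad_mult_left in blast)
qed

lemma left_comb_rad_redundant:
  assumes G: "finite G" "g0 \<notin> G" and g0: "g0 \<in> left_comb (insert g0 G) rad"
  shows "g0 \<in> left_comb G rad"
proof -
  obtain r where r: "g0 = (\<Sum>g\<in>insert g0 G. r g * g)" "\<forall>g. r g \<in> rad"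
    using g0 unfolding left_comb_def by blast
  obtain v where v: "v * (1 - r g0) = 1" using rad_one_diff_left_invertible r(2) by blast
  have "(1 - r g0) * g0 = (\<Sum>g\<in>G. r g * g)"
    using r(1) G by (simp add: left_diff_distrib algebra_simps)
  then have "v * ((1 - r g0) * g0) = (\<Sum>g\<in>G. (v * r g) * g)"
    by (simp add: sum_distrib_left mult.assoc)
  then have "g0 = (\<Sum>g\<in>G. (v * r g) * g)"
    using v by (simp add: mult.assoc[symmetric])
  then show ?thesis by (rule left_combI[rotated]) (use r(2) rad_mult_left in blast)
qed

lemma nakayama:
  assumes "finite G" "G \<subseteq> left_comb G rad"
  shows "G \<subseteq> {0}"
  using assms
proof (induction G rule: finite_induct)
  case (insert g0 G)
  have g0: "g0 \<in> left_comb G rad"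
    using insert left_comb_rad_redundant by blast
  then have "G \<subseteq> left_comb G rad"
    using insert left_comb_rad_eliminate by blast
  then have G0: "G \<subseteq> {0}" by (rule insert.IH)
  obtain r where "g0 = (\<Sum>g\<in>G. r g * g)" using g0 unfolding left_comb_def by blast
  also have "\<dots> = 0" using G0 by (intro sum.neutral) auto
  finally show ?case using G0 by simp
qed simp

section \<open>Finite dimensional algebras\<close>

locale k_algebra =
  fixes scale :: "'k::field \<Rightarrow> 'a::ring_1 \<Rightarrow> 'a"
  assumes is_vector_space: "vector_space scale"
    and scale_mult_left: "scale c (x * y) = scale c x * y"
    and scale_mult_right: "scale c (x * y) = x * scale c y"
begin

sublocale vector_space scale by (rule is_vector_space)

lemma scale_mult_mid: "a * scale c x * b = scale c (a * x * b)"
  by (metis scale_mult_left scale_mult_right)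

lemma rad_scale: "x \<in> rad \<Longrightarrow> scale c x \<in> rad"
  using scale_mult_right[of c x 1] rad_mult_right by simp

lemma subspace_rad: "subspace rad"
  unfolding subspace_def using zero_in_rad rad_add rad_scale by blast

lemma span_mult:
  assumes x: "x \<in> span X" and y: "y \<in> span Y"
  shows "x * y \<in> span {a * b | a b. a \<in> X \<and> b \<in> Y}"
proof -
  let ?P = "span {a * b | a b. a \<in> X \<and> b \<in> Y}"
  have base: "a * y \<in> ?P" if a: "a \<in> X" for a
  proof -
    have "subspace {y. a * y \<in> ?P}"
      unfolding subspace_def
      by (auto simp: distrib_left span_zero span_add scale_mult_right[symmetric] span_scale)
    moreover have "\<And>b. b \<in> Y \<Longrightarrow> a * b \<in> ?P" using a by (auto intro!: span_base)
    ultimately show ?thesis using span_induct[OF y, of "\<lambda>y. a * y \<in> ?P"] by blast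
  qed
  have "subspace {x. x * y \<in> ?P}"
    unfolding subspace_def
    by (auto simp: distrib_right span_zero span_add scale_mult_left[symmetric] span_scale)
  then show ?thesis using span_induct[OF x, of "\<lambda>x. x * y \<in> ?P"] base by blast
qed

lemma subspace_rad_sq: "subspace (rad_sq scale)"
  unfolding rad_sq_def by simp

lemma rad_sq_subset_rad: "rad_sq scale \<subseteq> rad"
  unfolding rad_sq_def by (rule span_minimal[OF _ subspace_rad]) (use rad_mult_right in blast)

lemma rad_sq_mult_mult: "w \<in> rad_sq scale \<Longrightarrow> a * w * b \<in> rad_sq scale"
proof -
  assume w: "w \<in> rad_sq scale"
  let ?G = "{x * y | x y. x \<in> rad \<and> y \<in> rad}"
  have "subspace {w. a * w * b \<in> span ?G}"
    unfolding subspace_def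
    by (auto simp: distrib_left distrib_right span_zero span_add scale_mult_mid span_scale)
  moreover have "a * (x * y) * b \<in> span ?G" if "x \<in> rad" "y \<in> rad" for x y
  proof -
    have "a * (x * y) * b = (a * x) * (y * b)" by (simp add: mult.assoc)
    moreover have "a * x \<in> rad" "y * b \<in> rad" using that rad_mult_left rad_mult_right by auto
    ultimately show ?thesis by (blast intro: span_base)
  qed
  ultimately show ?thesis
    using span_induct[of w ?G "\<lambda>w. a * w * b \<in> span ?G"] w unfolding rad_sq_def by blast
qed

lemma subspace_corner: "subspace X \<Longrightarrow> subspace (corner e j i X)"
  unfolding subspace_def corner_def
proof (intro conjI ballI allI; elim conjE)
  assume X: "0 \<in> X" "\<forall>x\<in>X. \<forall>y\<in>X. x + y \<in> X" "\<forall>c. \<forall>x\<in>X. scale c x \<in> X"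
  have "(0::'a) = e j * 0 * e i" by simp
  then show "0 \<in> {e j * x * e i |x. x \<in> X}" using X(1) by blast
  show "u + v \<in> {e j * x * e i |x. x \<in> X}"
    if uv: "u \<in> {e j * x * e i |x. x \<in> X}" "v \<in> {e j * x * e i |x. x \<in> X}" for u v
  proof -
    obtain x y where "u = e j * x * e i" "v = e j * y * e i" "x \<in> X" "y \<in> X" using uv by blast
    then have "u + v = e j * (x + y) * e i" "x + y \<in> X" using X by (auto simp: distrib_left distrib_right)
    then show ?thesis by blast
  qed
  show "scale c u \<in> {e j * x * e i |x. x \<in> X}" if u: "u \<in> {e j * x * e i |x. x \<in> X}" for c u
  proof -
    obtain x where "u = e j * x * e i" "x \<in> X" using u by blast
    then have "scale c u = e j * scale c x * e i" "scale c x \<in> X" using X by (auto simp: scale_mult_mid)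
    then show ?thesis by blast
  qed
qed

lemma corner_mono: "X \<subseteq> Y \<Longrightarrow> corner e j i X \<subseteq> corner e j i Y"
  unfolding corner_def by blast

lemma corner_rad_sq_subset: "corner e j i (rad_sq scale) \<subseteq> rad_sq scale"
  unfolding corner_def using rad_sq_mult_mult by blast

lemma subspace_left_comb:
  assumes Z: "subspace Z" shows "subspace (left_comb G Z)"
  unfolding subspace_def
proof (intro conjI ballI allI)
  show "0 \<in> left_comb G Z"
    by (rule left_combI[of "\<lambda>_. 0"]) (use subspace_0[OF Z] in auto)
next
  fix x y assume "x \<in> left_comb G Z" "y \<in> left_comb G Z"
  then obtain r1 r2 where "x = (\<Sum>g\<in>G. r1 g * g)" "y = (\<Sum>g\<in>G. r2 g * g)"
    "\<forall>g. r1 g \<in> Z" "\<forall>g. r2 g \<in> Z" unfolding left_comb_def by blast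
  then have "x + y = (\<Sum>g\<in>G. (r1 g + r2 g) * g)" "\<forall>g. r1 g + r2 g \<in> Z"
    using subspace_add[OF Z] by (auto simp: sum.distrib distrib_right)
  then show "x + y \<in> left_comb G Z" by (intro left_combI[of "\<lambda>g. r1 g + r2 g"]) auto
next
  fix c x assume "x \<in> left_comb G Z"
  then obtain r where "x = (\<Sum>g\<in>G. r g * g)" "\<forall>g. r g \<in> Z" unfolding left_comb_def by blast
  then have "scale c x = (\<Sum>g\<in>G. scale c (r g) * g)" "\<forall>g. scale c (r g) \<in> Z"
    using subspace_scale[OF Z] by (auto simp: scale_sum_right scale_mult_left)
  then show "scale c x \<in> left_comb G Z" by (intro left_combI[of "\<lambda>g. scale c (r g)"]) auto
qed

primrec rad_pow :: "nat \<Rightarrow> 'a set" where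
  "rad_pow 0 = UNIV"
| "rad_pow (Suc k) = span {x * y | x y. x \<in> rad \<and> y \<in> rad_pow k}"

declare rad_pow.simps(2) [simp del]

lemma subspace_rad_pow: "subspace (rad_pow k)"
  by (cases k) (auto simp: rad_pow.simps)

lemma rad_pow_1: "rad_pow 1 = rad"
proof -
  have "span {x * y | x y. x \<in> rad \<and> y \<in> (UNIV::'a set)} = rad"
  proof (rule span_subspace)
    show "{x * y | x y. x \<in> rad \<and> y \<in> (UNIV::'a set)} \<subseteq> rad" using rad_mult_right by blast
    show "rad \<subseteq> span {x * y | x y. x \<in> rad \<and> y \<in> (UNIV::'a set)}"
    proof
      fix x :: 'a assume "x \<in> rad" then have "x = x * 1" "x \<in> rad" by simp_all
      then show "x \<in> span {x * y | x y. x \<in> rad \<and> y \<in> (UNIV::'a set)}" by (blast intro: span_base)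
    qed
  qed (rule subspace_rad)
  then show ?thesis by (simp add: rad_pow.simps)
qed

lemma rad_mult_rad_pow: "x \<in> rad \<Longrightarrow> y \<in> rad_pow k \<Longrightarrow> x * y \<in> rad_pow (Suc k)"
  unfolding rad_pow.simps(2) by (rule span_base) blast

lemma rad_pow_Suc_subset: "rad_pow (Suc k) \<subseteq> rad_pow k"
proof (induction k)
  case (Suc k)
  then have "{x * y | x y. x \<in> rad \<and> y \<in> rad_pow (Suc k)} \<subseteq> {x * y | x y. x \<in> rad \<and> y \<in> rad_pow k}"
    by blast
  then show ?case unfolding rad_pow.simps(2)[of "Suc k"] rad_pow.simps(2)[of k] by (rule span_mono)
qed simp

lemma rad_pow_antimono: "k \<le> m \<Longrightarrow> rad_pow m \<subseteq> rad_pow k"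
  by (induction m rule: dec_induct) (use rad_pow_Suc_subset in blast)+

lemma rad_pow_mult_rad: "y \<in> rad_pow k \<Longrightarrow> z \<in> rad \<Longrightarrow> y * z \<in> rad_pow (Suc k)"
proof (induction k arbitrary: y)
  case 0
  then show ?case using rad_pow_1 rad_mult_left by simp
next
  case (Suc k)
  have "subspace {y. y * z \<in> rad_pow (Suc (Suc k))}"
    using subspace_rad_pow[of "Suc (Suc k)"] unfolding subspace_def
    by (auto simp: distrib_right scale_mult_left[symmetric])
  moreover have "x * w * z \<in> rad_pow (Suc (Suc k))" if "x \<in> rad" "w \<in> rad_pow k" for x w
    using Suc.IH[OF that(2)] rad_mult_rad_pow[OF that(1)] Suc.prems(2)
    by (simp add: mult.assoc)
  ultimately show ?case
    using span_induct[of y "{x * y | x y. x \<in> rad \<and> y \<in> rad_pow k}" "\<lambda>y. y * z \<in> rad_pow (Suc (Suc k))"]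
      Suc.prems(1) by (auto simp: rad_pow.simps)
qed

lemma rad_pow_2: "rad_pow 2 = rad_sq scale"
  using rad_pow.simps(2)[of 1] unfolding rad_pow_1 rad_sq_def Suc_1 .


lemma rad_subset_add_rad_pow:
  assumes J: "subspace J" "J \<subseteq> rad" "\<And>x y. x \<in> J \<Longrightarrow> y \<in> J \<Longrightarrow> x * y \<in> J"
    and gen: "rad \<subseteq> {a + q | a q. a \<in> J \<and> q \<in> rad_sq scale}"
  shows "rad \<subseteq> {a + q | a q. a \<in> J \<and> q \<in> rad_pow (Suc k)}"
proof -
  define JP where "JP k = {a + q | a q. a \<in> J \<and> q \<in> rad_pow k}" for k
  have sJP: "subspace (JP k)" for k unfolding JP_def by (rule subspace_sums[OF J(1) subspace_rad_pow])
  show ?thesis unfolding JP_def[symmetric]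
  proof (induction k)
    case 0
    have "x \<in> JP (Suc 0)" if "x \<in> rad" for x
      unfolding JP_def using that rad_pow_1 subspace_0[OF J(1)] by force
    then show ?case by blast
  next
    case (Suc k)
    have "y * z \<in> JP (Suc (Suc k))" if yz: "y \<in> rad" "z \<in> rad" for y z
    proof -
      obtain a1 q1 where 1: "y = a1 + q1" "a1 \<in> J" "q1 \<in> rad_pow (Suc k)" using Suc yz(1) unfolding JP_def by blast
      obtain a2 q2 where 2: "z = a2 + q2" "a2 \<in> J" "q2 \<in> rad_pow (Suc k)" using Suc yz(2) unfolding JP_def by blast
      have "q2 \<in> rad" using rad_pow_antimono[of 1 "Suc k"] 2(3) unfolding rad_pow_1 by auto
      then have "a1 * q2 + q1 * a2 + q1 * q2 \<in> rad_pow (Suc (Suc k))"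
        using rad_mult_rad_pow[of a1 q2] rad_pow_mult_rad[of q1 _ a2] rad_pow_mult_rad[of q1 _ q2] 1 2 J(2)
        by (intro subspace_add[OF subspace_rad_pow]) auto
      moreover have "y * z = a1 * a2 + (a1 * q2 + q1 * a2 + q1 * q2)" using 1 2 by (simp add: algebra_simps)
      ultimately show ?thesis unfolding JP_def using J(3) 1 2 by blast
    qed
    then have "rad_sq scale \<subseteq> JP (Suc (Suc k))"
      unfolding rad_sq_def by (intro span_minimal sJP) blast
    moreover have "J \<subseteq> JP (Suc (Suc k))"
      unfolding JP_def using subspace_0[OF subspace_rad_pow] by force
    ultimately show ?case using gen subspace_add[OF sJP] by blast
  qed
qed

end

locale fd_k_algebra = k_algebra +
  assumes finite_dim: "\<exists>S. finite S \<and> span S = UNIV"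
begin

lemma finite_if_independent: "independent B \<Longrightarrow> finite B"
  using finite_dim independent_span_bound by (metis top_greatest)

lemma rad_pow_stabilizes: obtains M where "rad_pow (Suc M) = rad_pow M"
proof (rule ccontr)
  assume "\<not> thesis"
  then have strict: "rad_pow (Suc k) \<noteq> rad_pow k" for k using that by blast
  obtain S where S: "finite S" "span S = UNIV" using finite_dim by blast
  obtain B where B: "independent B" "UNIV \<subseteq> span B"
    by (rule basis_exists[of UNIV])
  interpret fd: finite_dimensional_vector_space scale B
    using B finite_if_independent by unfold_locales auto
  have "span (rad_pow (Suc k)) \<subset> span (rad_pow k)" for k
    using rad_pow_Suc_subset[of k] strict[of k] subspace_rad_pow[of k] subspace_rad_pow[of "Suc k"]
    by (metis psubsetI span_eq_iff)
  then have lt: "dim (rad_pow (Suc k)) < dim (rad_pow k)" for k by (rule fd.dim_psubset)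
  have "dim (rad_pow k) + k \<le> dim (rad_pow 0)" for k
  proof (induction k)
    case (Suc k)
    then show ?case using lt[of k] by linarith
  qed simp
  from this[of "Suc (dim (rad_pow 0))"] show False by simp
qed

text \<open>A stable power P of the radical satisfies P = rad P, hence vanishes by Nakayama's lemma.\<close>
lemma rad_pow_nilpotent: obtains N where "1 \<le> N" "rad_pow N = {0}"
proof -
  obtain M where M: "rad_pow (Suc M) = rad_pow M" by (rule rad_pow_stabilizes)
  define P where "P = rad_pow M"
  have P_eq: "P = span {x * y | x y. x \<in> rad \<and> y \<in> P}"
    using rad_pow.simps(2)[of M] unfolding M P_def .
  obtain G where G: "G \<subseteq> P" "independent G" "P \<subseteq> span G"
    by (rule basis_exists[of P])
  have fG: "finite G" using finite_if_independent G(2) .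
  have "x * y \<in> left_comb G rad" if "x \<in> rad" "y \<in> P" for x y
  proof -
    obtain c where "y = (\<Sum>g\<in>G. scale (c g) g)" using G(3) \<open>y \<in> P\<close> span_finite[OF fG] by blast
    then have "x * y = (\<Sum>g\<in>G. (x * scale (c g) 1) * g)"
      by (simp add: sum_distrib_left mult.assoc scale_mult_left[symmetric])
    then show ?thesis by (rule left_combI[rotated]) (use that rad_mult_right in blast)
  qed
  then have "P \<subseteq> left_comb G rad"
    by (subst P_eq, intro span_minimal subspace_left_comb subspace_rad) blast
  then have "G \<subseteq> {0}" using nakayama fG G(1) by blast
  then have "span G \<subseteq> {0}" using span_mono[of G "{0}"] by simp
  then have "P = {0}" using G(3) subspace_0[OF subspace_rad_pow] unfolding P_def by blast
  then show thesis using M by (intro that[of "Suc M"]) (simp_all add: P_def)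
qed

lemma rad_subset_if_generates_mod_rad_sq:
  assumes J: "subspace J" "J \<subseteq> rad" "\<And>x y. x \<in> J \<Longrightarrow> y \<in> J \<Longrightarrow> x * y \<in> J"
    and gen: "rad \<subseteq> {a + q | a q. a \<in> J \<and> q \<in> rad_sq scale}"
  shows "rad \<subseteq> J"
proof -
  obtain N where N: "1 \<le> N" "rad_pow N = {0}" by (rule rad_pow_nilpotent)
  then have "rad \<subseteq> {a + q | a q. a \<in> J \<and> q \<in> rad_pow (Suc (N - 1))}"
    using rad_subset_add_rad_pow[OF J gen] by blast
  then show ?thesis using N by simp
qed

end

section \<open>Paths, walks and their weights\<close>

lemma path_from_append:
  "path_from Q1 s t x (ps @ qs) z \<longleftrightarrow> (\<exists>y. path_from Q1 s t x ps y \<and> path_from Q1 s t y qs z)"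
  by (induction ps arbitrary: x) auto

lemma path_from_snoc:
  "path_from Q1 s t x (ps @ [\<alpha>]) z \<longleftrightarrow> path_from Q1 s t x ps (s \<alpha>) \<and> \<alpha> \<in> Q1 \<and> t \<alpha> = z"
  by (auto simp: path_from_append)

definition path_weight :: "('q \<Rightarrow> 'k::comm_monoid_add) \<Rightarrow> 'q list \<Rightarrow> 'k" where
  "path_weight \<omega> ps = sum_list (map \<omega> ps)"

definition walk_weight :: "('q \<Rightarrow> 'k::ab_group_add) \<Rightarrow> ('q \<times> bool) list \<Rightarrow> 'k" where
  "walk_weight \<omega> w = sum_list (map (\<lambda>(\<alpha>, b). if b then \<omega> \<alpha> else - \<omega> \<alpha>) w)"

lemma walk_weight_append: "walk_weight \<omega> (u @ v) = walk_weight \<omega> u + walk_weight \<omega> v"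
  unfolding walk_weight_def by simp

lemma walk_weight_path_walk: "walk_weight \<omega> (path_walk ps) = path_weight \<omega> ps"
  unfolding walk_weight_def path_walk_def path_weight_def by (induction ps) auto

lemma walk_weight_walk_inv: "walk_weight \<omega> (walk_inv w) = - walk_weight \<omega> w"
  unfolding walk_weight_def walk_inv_def by (induction w) (auto simp: sum_list_rev)

section \<open>Path values\<close>

locale quiver_algebra = fd_k_algebra scale
  for scale :: "'k::field \<Rightarrow> 'a::ring_1 \<Rightarrow> 'a" +
  fixes n :: nat and e :: "nat \<Rightarrow> 'a" and Q1 :: "'q set" and s t :: "'q \<Rightarrow> nat"
  assumes idempotents: "complete_prim_orth_idems n e"
    and arrow_ends: "\<forall>\<alpha>\<in>Q1. s \<alpha> \<in> {1..n} \<and> t \<alpha> \<in> {1..n}"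
    and finite_arrows: "finite Q1"
begin

lemma e_idem: "i \<in> {1..n} \<Longrightarrow> e i * e i = e i"
  and e_nonzero: "i \<in> {1..n} \<Longrightarrow> e i \<noteq> 0"
  using idempotents unfolding complete_prim_orth_idems_def primitive_idempotent_def by blast+

lemma e_mult: "i \<in> {1..n} \<Longrightarrow> j \<in> {1..n} \<Longrightarrow> e i * e j = (if i = j then e i else 0)"
  using e_idem idempotents unfolding complete_prim_orth_idems_def by auto

lemma sum_e: "sum e {1..n} = 1"
  using idempotents unfolding complete_prim_orth_idems_def by blast

lemma e_notin_rad: "i \<in> {1..n} \<Longrightarrow> e i \<notin> rad"
  using idempotent_notin_rad e_idem e_nonzero by blast

lemma inj_on_e: "inj_on e {1..n}"
  by (rule inj_onI) (metis e_mult e_nonzero)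

lemma e_mult_eq_if: "i \<in> {1..n} \<Longrightarrow> j \<in> {1..n} \<Longrightarrow> e j * v = v \<Longrightarrow> e i * v = (if i = j then v else 0)"
  and mult_e_eq_if: "i \<in> {1..n} \<Longrightarrow> j \<in> {1..n} \<Longrightarrow> v * e j = v \<Longrightarrow> v * e i = (if i = j then v else 0)"
  by (metis e_mult mult.assoc mult_zero_left mult_zero_right)+

lemma idempotent_comb_mult:
  assumes y: "y \<in> {1..n}" and v: "e y * v = v"
  shows "(\<Sum>i\<in>{1..n}. scale (c i) (e i)) * v = scale (c y) v"
proof -
  have "(\<Sum>i\<in>{1..n}. scale (c i) (e i)) * v = (\<Sum>i\<in>{1..n}. scale (c i) (e i * v))"
    by (simp add: sum_distrib_right scale_mult_left)
  also have "\<dots> = (\<Sum>i\<in>{1..n}. if i = y then scale (c y) v else 0)"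
    by (rule sum.cong) (use e_mult_eq_if[OF _ y v] in auto)
  finally show ?thesis using y by simp
qed

lemma mult_idempotent_comb:
  assumes x: "x \<in> {1..n}" and v: "v * e x = v"
  shows "v * (\<Sum>i\<in>{1..n}. scale (c i) (e i)) = scale (c x) v"
proof -
  have "v * (\<Sum>i\<in>{1..n}. scale (c i) (e i)) = (\<Sum>i\<in>{1..n}. scale (c i) (v * e i))"
    by (simp add: sum_distrib_left scale_mult_right)
  also have "\<dots> = (\<Sum>i\<in>{1..n}. if i = x then scale (c x) v else 0)"
    by (rule sum.cong) (use mult_e_eq_if[OF _ x v] in auto)
  finally show ?thesis using x by simp
qed

lemma idempotent_comb_in_rad:
  assumes "(\<Sum>i\<in>{1..n}. scale (c i) (e i)) \<in> rad" "k \<in> {1..n}" shows "c k = 0"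
proof (rule ccontr)
  assume "c k \<noteq> 0"
  have "(\<Sum>i\<in>{1..n}. scale (c i) (e i)) * e k = scale (c k) (e k)"
    by (rule idempotent_comb_mult[OF assms(2) e_idem[OF assms(2)]])
  moreover have "(\<Sum>i\<in>{1..n}. scale (c i) (e i)) * e k \<in> rad" by (rule rad_mult_right[OF assms(1)])
  ultimately have "scale (c k) (e k) \<in> rad" by simp
  then have "scale (inverse (c k)) (scale (c k) (e k)) \<in> rad" by (rule rad_scale)
  with \<open>c k \<noteq> 0\<close> show False using e_notin_rad assms(2) by simp
qed

lemma sum_over_e_image: "(\<Sum>v\<in>e ` {1..n}. f v) = (\<Sum>i\<in>{1..n}. f (e i))"
  using sum.reindex[OF inj_on_e, of f] by simp

lemma independent_e: "independent (e ` {1..n})"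
proof (rule independent_if_scalars_zero)
  fix f v assume sum0: "(\<Sum>x\<in>e ` {1..n}. scale (f x) x) = 0" and "v \<in> e ` {1..n}"
  then obtain k where k: "k \<in> {1..n}" "v = e k" by blast
  have "(\<Sum>i\<in>{1..n}. scale (f (e i)) (e i)) \<in> rad"
    using sum0 zero_in_rad unfolding sum_over_e_image by simp
  then show "f v = 0" using idempotent_comb_in_rad[of "\<lambda>i. f (e i)" k] k by simp
qed simp

lemma span_e_inter_rad: "u \<in> span (e ` {1..n}) \<Longrightarrow> u \<in> rad \<Longrightarrow> u = 0"
proof -
  assume u: "u \<in> span (e ` {1..n})" "u \<in> rad"
  obtain c where "u = (\<Sum>v\<in>e ` {1..n}. scale (c v) v)" using u(1) span_finite[of "e ` {1..n}"] by auto
  then have c: "u = (\<Sum>i\<in>{1..n}. scale (c (e i)) (e i))" unfolding sum_over_e_image .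
  then have "\<forall>k\<in>{1..n}. c (e k) = 0" using idempotent_comb_in_rad[of "\<lambda>i. c (e i)"] u(2) by simp
  then show "u = 0" using c by simp
qed

lemma corner_decomposition: "w = (\<Sum>i\<in>{1..n}. \<Sum>j\<in>{1..n}. e j * w * e i)"
proof -
  have "w = (\<Sum>j\<in>{1..n}. e j) * w * (\<Sum>i\<in>{1..n}. e i)" using sum_e by simp
  also have "\<dots> = (\<Sum>i\<in>{1..n}. \<Sum>j\<in>{1..n}. e j * w * e i)"
    by (simp add: sum_distrib_left sum_distrib_right)
  finally show ?thesis .
qed

definition arrows_in_corners :: "('q \<Rightarrow> 'a) \<Rightarrow> bool" where
  "arrows_in_corners \<phi> \<longleftrightarrow> (\<forall>\<alpha>\<in>Q1. \<phi> \<alpha> = e (t \<alpha>) * \<phi> \<alpha> * e (s \<alpha>))"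

lemma path_from_end_vertex: "path_from Q1 s t x ps y \<Longrightarrow> x \<in> {1..n} \<Longrightarrow> y \<in> {1..n}"
  by (induction ps arbitrary: x) (use arrow_ends in auto)

lemma path_val_snoc:
  assumes c: "arrows_in_corners \<phi>" and p: "path_from Q1 s t x ps (s \<alpha>)" and \<alpha>: "\<alpha> \<in> Q1"
  shows "path_val e \<phi> x (ps @ [\<alpha>]) = \<phi> \<alpha> * path_val e \<phi> x ps"
proof (cases "ps = []")
  case True
  then have "x = s \<alpha>" using p by simp
  then have "\<phi> \<alpha> * e x = \<phi> \<alpha>"
    using c \<alpha> e_idem arrow_ends unfolding arrows_in_corners_def by (metis mult.assoc)
  then show ?thesis using True unfolding path_val_def by simp
qed (simp add: path_val_def)

lemma path_val_in_corner:
  assumes c: "arrows_in_corners \<phi>" and p: "path_from Q1 s t x ps y" and x: "x \<in> {1..n}"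
  shows "e y * path_val e \<phi> x ps = path_val e \<phi> x ps \<and> path_val e \<phi> x ps * e x = path_val e \<phi> x ps"
  using p
proof (induction ps arbitrary: y rule: rev_induct)
  case Nil
  then show ?case using x e_idem unfolding path_val_def by simp
next
  case (snoc \<alpha> ps)
  have p': "path_from Q1 s t x ps (s \<alpha>)" "\<alpha> \<in> Q1" "t \<alpha> = y" using snoc.prems path_from_snoc by metis+
  have "e y * \<phi> \<alpha> = \<phi> \<alpha>"
    using c p' e_idem arrow_ends unfolding arrows_in_corners_def by (metis mult.assoc)
  then have "e y * (\<phi> \<alpha> * path_val e \<phi> x ps) = \<phi> \<alpha> * path_val e \<phi> x ps" by (metis mult.assoc)
  moreover have "\<phi> \<alpha> * path_val e \<phi> x ps * e x = \<phi> \<alpha> * path_val e \<phi> x ps"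
    using snoc.IH[OF p'(1)] by (metis mult.assoc)
  ultimately show ?case using path_val_snoc[OF c p'(1,2)] by simp
qed

lemmas e_mult_path_val = path_val_in_corner[THEN conjunct1]
  and path_val_mult_e = path_val_in_corner[THEN conjunct2]

lemma path_val_append:
  assumes c: "arrows_in_corners \<phi>" and p: "path_from Q1 s t x ps y" and q: "path_from Q1 s t y qs z"
    and x: "x \<in> {1..n}"
  shows "path_val e \<phi> x (ps @ qs) = path_val e \<phi> y qs * path_val e \<phi> x ps"
  using q
proof (induction qs arbitrary: z rule: rev_induct)
  case Nil
  then show ?case using e_mult_path_val[OF c p x] unfolding path_val_def by simp
next
  case (snoc \<alpha> qs)
  have q': "path_from Q1 s t y qs (s \<alpha>)" "\<alpha> \<in> Q1" using snoc.prems path_from_snoc by metis+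
  have pq: "path_from Q1 s t x (ps @ qs) (s \<alpha>)" using p q'(1) path_from_append by metis
  show ?case
    using path_val_snoc[OF c pq q'(2)] snoc.IH[OF q'(1)] path_val_snoc[OF c q'] by (simp add: mult.assoc)
qed

lemma path_val_mult_eq_0:
  assumes c: "arrows_in_corners \<phi>" and p: "path_from Q1 s t x ps y" and q: "path_from Q1 s t x' qs z"
    and x: "x \<in> {1..n}" and x': "x' \<in> {1..n}" and ne: "y \<noteq> x'"
  shows "path_val e \<phi> x' qs * path_val e \<phi> x ps = 0"
proof -
  have "path_val e \<phi> x' qs * path_val e \<phi> x ps = path_val e \<phi> x' qs * (e x' * e y) * path_val e \<phi> x ps"
    using e_mult_path_val[OF c p x] path_val_mult_e[OF c q x'] by (metis mult.assoc)
  then show ?thesis using e_mult[OF x' path_from_end_vertex[OF p x]] ne by simp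
qed

definition path_vals :: "('q \<Rightarrow> 'a) \<Rightarrow> nat \<Rightarrow> 'a set" where
  "path_vals \<phi> k = {path_val e \<phi> x ps | x ps. is_path n Q1 s t (x, ps) \<and> k \<le> length ps}"

lemma path_vals_antimono: "k \<le> m \<Longrightarrow> path_vals \<phi> m \<subseteq> path_vals \<phi> k"
  unfolding path_vals_def by force

lemma e_in_path_vals: "e ` {1..n} \<subseteq> path_vals \<phi> 0"
proof
  fix v assume "v \<in> e ` {1..n}"
  then obtain i where "i \<in> {1..n}" "v = path_val e \<phi> i []" by (auto simp: path_val_def)
  moreover have "is_path n Q1 s t (i, [])" if "i \<in> {1..n}" for i using that by (simp add: is_path_def)
  ultimately show "v \<in> path_vals \<phi> 0" unfolding path_vals_def by blast
qed

lemma arrow_in_path_vals: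
  assumes "\<alpha> \<in> Q1" shows "\<phi> \<alpha> \<in> path_vals \<phi> 1"
proof -
  have "\<phi> \<alpha> = path_val e \<phi> (s \<alpha>) [\<alpha>]" by (simp add: path_val_def)
  moreover have "is_path n Q1 s t (s \<alpha>, [\<alpha>])" using arrow_ends assms unfolding is_path_def by auto
  ultimately show ?thesis unfolding path_vals_def by force
qed

lemma path_vals_mult:
  assumes c: "arrows_in_corners \<phi>" and a: "a \<in> path_vals \<phi> k" and b: "b \<in> path_vals \<phi> m"
  shows "a * b \<in> span (path_vals \<phi> (k + m))"
proof -
  obtain x' qs z where A: "a = path_val e \<phi> x' qs" "x' \<in> {1..n}" "path_from Q1 s t x' qs z" "k \<le> length qs"
    using a unfolding path_vals_def is_path_def by auto
  obtain x ps y where B: "b = path_val e \<phi> x ps" "x \<in> {1..n}" "path_from Q1 s t x ps y" "m \<le> length ps"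
    using b unfolding path_vals_def is_path_def by auto
  show ?thesis
  proof (cases "y = x'")
    case True
    then have "a * b = path_val e \<phi> x (ps @ qs)" using path_val_append[OF c B(3) _ B(2)] A B by simp
    moreover have "is_path n Q1 s t (x, ps @ qs)"
      using A B True path_from_append unfolding is_path_def by fastforce
    ultimately have "a * b \<in> path_vals \<phi> (k + m)" unfolding path_vals_def using A B by force
    then show ?thesis by (rule span_base)
  next
    case False
    then show ?thesis using path_val_mult_eq_0[OF c B(3) A(3) B(2) A(2)] A B span_zero by simp
  qed
qed

lemma span_path_vals_mult:
  assumes c: "arrows_in_corners \<phi>" and a: "a \<in> span (path_vals \<phi> k)" and b: "b \<in> span (path_vals \<phi> m)"
  shows "a * b \<in> span (path_vals \<phi> (k + m))"
proof -
  have "a * b \<in> span {x * y | x y. x \<in> path_vals \<phi> k \<and> y \<in> path_vals \<phi> m}" by (rule span_mult[OF a b])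
  also have "\<dots> \<subseteq> span (path_vals \<phi> (k + m))"
    by (rule span_minimal) (use path_vals_mult[OF c] in auto)
  finally show ?thesis .
qed

lemma pa_map_eq_sum_superset:
  assumes "finite F" "{p. \<rho> p \<noteq> 0} \<subseteq> F"
  shows "pa_map scale e \<phi> \<rho> = (\<Sum>p\<in>F. scale (\<rho> p) (path_val e \<phi> (fst p) (snd p)))"
  unfolding pa_map_def by (rule sum.mono_neutral_left) (use assms in auto)

lemma pa_map_add:
  assumes "pa_elem n Q1 s t \<rho>1" "pa_elem n Q1 s t \<rho>2"
  shows "pa_elem n Q1 s t (\<lambda>p. \<rho>1 p + \<rho>2 p)"
    and "pa_map scale e \<phi> (\<lambda>p. \<rho>1 p + \<rho>2 p) = pa_map scale e \<phi> \<rho>1 + pa_map scale e \<phi> \<rho>2"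
proof -
  let ?F = "{p. \<rho>1 p \<noteq> 0} \<union> {p. \<rho>2 p \<noteq> 0}"
  have F: "finite ?F" using assms unfolding pa_elem_def by blast
  show "pa_elem n Q1 s t (\<lambda>p. \<rho>1 p + \<rho>2 p)"
    using assms unfolding pa_elem_def by (auto intro: finite_subset[OF _ F]) (metis add.left_neutral)
  have "pa_map scale e \<phi> (\<lambda>p. \<rho>1 p + \<rho>2 p) = (\<Sum>p\<in>?F. scale (\<rho>1 p + \<rho>2 p) (path_val e \<phi> (fst p) (snd p)))"
    and "pa_map scale e \<phi> \<rho>1 = (\<Sum>p\<in>?F. scale (\<rho>1 p) (path_val e \<phi> (fst p) (snd p)))"
    and "pa_map scale e \<phi> \<rho>2 = (\<Sum>p\<in>?F. scale (\<rho>2 p) (path_val e \<phi> (fst p) (snd p)))"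
    by (rule pa_map_eq_sum_superset[OF F]; auto)+
  then show "pa_map scale e \<phi> (\<lambda>p. \<rho>1 p + \<rho>2 p) = pa_map scale e \<phi> \<rho>1 + pa_map scale e \<phi> \<rho>2"
    by (simp add: scale_left_distrib sum.distrib)
qed

lemma pa_map_scale:
  assumes "pa_elem n Q1 s t \<rho>"
  shows "pa_elem n Q1 s t (\<lambda>p. c * \<rho> p)"
    and "pa_map scale e \<phi> (\<lambda>p. c * \<rho> p) = scale c (pa_map scale e \<phi> \<rho>)"
proof -
  have F: "finite {p. \<rho> p \<noteq> 0}" using assms unfolding pa_elem_def by blast
  show "pa_elem n Q1 s t (\<lambda>p. c * \<rho> p)"
    using assms unfolding pa_elem_def by (auto intro: finite_subset[OF _ F])
  have "pa_map scale e \<phi> (\<lambda>p. c * \<rho> p) = (\<Sum>p | \<rho> p \<noteq> 0. scale (c * \<rho> p) (path_val e \<phi> (fst p) (snd p)))"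
    by (rule pa_map_eq_sum_superset[OF F]) auto
  then show "pa_map scale e \<phi> (\<lambda>p. c * \<rho> p) = scale c (pa_map scale e \<phi> \<rho>)"
    by (simp add: pa_map_def scale_sum_right)
qed

lemma pa_map_path_indicator:
  assumes "is_path n Q1 s t p"
  shows "pa_elem n Q1 s t (\<lambda>q. if q = p then 1 else 0)"
    and "pa_map scale e \<phi> (\<lambda>q. if q = p then 1 else 0) = path_val e \<phi> (fst p) (snd p)"
  using assms pa_map_eq_sum_superset[of "{p}"] unfolding pa_elem_def by auto

lemma subspace_pa_map_image: "subspace {pa_map scale e \<phi> \<rho> | \<rho>. pa_elem n Q1 s t \<rho>}"
  unfolding subspace_def
proof (intro conjI ballI allI)
  show "0 \<in> {pa_map scale e \<phi> \<rho> | \<rho>. pa_elem n Q1 s t \<rho>}"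
    by (rule CollectI, rule exI[of _ "\<lambda>_. 0"]) (simp add: pa_elem_def pa_map_def)
next
  fix a b assume "a \<in> {pa_map scale e \<phi> \<rho> | \<rho>. pa_elem n Q1 s t \<rho>}"
    "b \<in> {pa_map scale e \<phi> \<rho> | \<rho>. pa_elem n Q1 s t \<rho>}"
  then obtain \<rho>1 \<rho>2 where "pa_elem n Q1 s t \<rho>1" "pa_elem n Q1 s t \<rho>2"
    "a = pa_map scale e \<phi> \<rho>1" "b = pa_map scale e \<phi> \<rho>2" by blast
  then show "a + b \<in> {pa_map scale e \<phi> \<rho> | \<rho>. pa_elem n Q1 s t \<rho>}"
    using pa_map_add[of \<rho>1 \<rho>2] by (intro CollectI exI[of _ "\<lambda>p. \<rho>1 p + \<rho>2 p"]) simp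
next
  fix c a assume "a \<in> {pa_map scale e \<phi> \<rho> | \<rho>. pa_elem n Q1 s t \<rho>}"
  then obtain \<rho> where "pa_elem n Q1 s t \<rho>" "a = pa_map scale e \<phi> \<rho>" by blast
  then show "scale c a \<in> {pa_map scale e \<phi> \<rho> | \<rho>. pa_elem n Q1 s t \<rho>}"
    using pa_map_scale[of \<rho>, where c=c] by (intro CollectI exI[of _ "\<lambda>p. c * \<rho> p"]) simp
qed

lemma pa_map_image: "{pa_map scale e \<phi> \<rho> | \<rho>. pa_elem n Q1 s t \<rho>} = span (path_vals \<phi> 0)"
proof
  show "{pa_map scale e \<phi> \<rho> | \<rho>. pa_elem n Q1 s t \<rho>} \<subseteq> span (path_vals \<phi> 0)"
  proof clarify
    fix \<rho> :: "nat \<times> 'q list \<Rightarrow> 'k" assume \<rho>: "pa_elem n Q1 s t \<rho>"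
    show "pa_map scale e \<phi> \<rho> \<in> span (path_vals \<phi> 0)"
      unfolding pa_map_def
    proof (intro span_sum span_scale span_base)
      fix p assume "p \<in> {p. \<rho> p \<noteq> 0}"
      then show "path_val e \<phi> (fst p) (snd p) \<in> path_vals \<phi> 0"
        using \<rho> unfolding pa_elem_def path_vals_def by (cases p) auto
    qed
  qed
next
  have "path_vals \<phi> 0 \<subseteq> {pa_map scale e \<phi> \<rho> | \<rho>. pa_elem n Q1 s t \<rho>}"
  proof
    fix v assume "v \<in> path_vals \<phi> 0"
    then obtain p where "is_path n Q1 s t p" "v = path_val e \<phi> (fst p) (snd p)"
      unfolding path_vals_def by auto
    then show "v \<in> {pa_map scale e \<phi> \<rho> | \<rho>. pa_elem n Q1 s t \<rho>}"
      using pa_map_path_indicator[of p] by (intro CollectI exI[of _ "\<lambda>q. if q = p then 1 else 0"]) simp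
  qed
  then show "span (path_vals \<phi> 0) \<subseteq> {pa_map scale e \<phi> \<rho> | \<rho>. pa_elem n Q1 s t \<rho>}"
    by (rule span_minimal[OF _ subspace_pa_map_image])
qed

lemma pa_map_surj_iff:
  "(\<forall>a. \<exists>\<rho>. pa_elem n Q1 s t \<rho> \<and> pa_map scale e \<phi> \<rho> = a) \<longleftrightarrow> span (path_vals \<phi> 0) = UNIV"
proof
  assume "\<forall>a. \<exists>\<rho>. pa_elem n Q1 s t \<rho> \<and> pa_map scale e \<phi> \<rho> = a"
  then have "a \<in> {pa_map scale e \<phi> \<rho> | \<rho>. pa_elem n Q1 s t \<rho>}" for a
    by (metis (mono_tags, lifting) mem_Collect_eq)
  then show "span (path_vals \<phi> 0) = UNIV" unfolding pa_map_image[symmetric] by blast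
next
  assume "span (path_vals \<phi> 0) = UNIV"
  then have im: "a \<in> {pa_map scale e \<phi> \<rho> | \<rho>. pa_elem n Q1 s t \<rho>}" for a
    unfolding pa_map_image[symmetric] by simp
  show "\<forall>a. \<exists>\<rho>. pa_elem n Q1 s t \<rho> \<and> pa_map scale e \<phi> \<rho> = a"
  proof
    fix a
    obtain \<rho> where "a = pa_map scale e \<phi> \<rho>" "pa_elem n Q1 s t \<rho>" using im[of a] by blast
    then show "\<exists>\<rho>. pa_elem n Q1 s t \<rho> \<and> pa_map scale e \<phi> \<rho> = a" by blast
  qed
qed

lemma path_val_in_rad_pow:
  assumes c: "arrows_in_corners \<phi>" and \<phi>: "\<forall>\<alpha>\<in>Q1. \<phi> \<alpha> \<in> rad" and p: "path_from Q1 s t x ps y"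
  shows "path_val e \<phi> x ps \<in> rad_pow (length ps)"
  using p
proof (induction ps arbitrary: y rule: rev_induct)
  case (snoc \<alpha> ps)
  then have p': "path_from Q1 s t x ps (s \<alpha>)" "\<alpha> \<in> Q1" using path_from_snoc by metis+
  then show ?case
    using path_val_snoc[OF c p'] rad_mult_rad_pow snoc.IH[OF p'(1)] \<phi> by simp
qed simp

lemma path_vals_subset_rad_pow:
  assumes c: "arrows_in_corners \<phi>" and \<phi>: "\<forall>\<alpha>\<in>Q1. \<phi> \<alpha> \<in> rad"
  shows "path_vals \<phi> k \<subseteq> rad_pow k"
proof
  fix v assume "v \<in> path_vals \<phi> k"
  then obtain x ps y where "v = path_val e \<phi> x ps" "path_from Q1 s t x ps y" "k \<le> length ps"
    unfolding path_vals_def is_path_def by auto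
  then show "v \<in> rad_pow k" using path_val_in_rad_pow[OF c \<phi>] rad_pow_antimono by blast
qed

end

section \<open>From a presentation to a diagonalising basis\<close>

context quiver_algebra
begin

lemma hh_class_self: "d \<in> Der0 scale n e \<Longrightarrow> d \<in> hh_class scale n e d"
  unfolding hh_class_def Int0_def by (force intro: span_zero)

lemma Int0_add:
  assumes "f \<in> Int0 scale n e" "g \<in> Int0 scale n e" shows "(\<lambda>a. f a + g a) \<in> Int0 scale n e"
proof -
  obtain x y where "x \<in> span (e ` {1..n})" "y \<in> span (e ` {1..n})"
    "f = (\<lambda>a. x * a - a * x)" "g = (\<lambda>a. y * a - a * y)"
    using assms unfolding Int0_def by blast
  moreover have "(\<lambda>a. (x * a - a * x) + (y * a - a * y)) = (\<lambda>a. (x + y) * a - a * (x + y))"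
    by (simp add: algebra_simps)
  ultimately show ?thesis unfolding Int0_def using span_add by blast
qed

lemma Int0_uminus:
  assumes "f \<in> Int0 scale n e" shows "(\<lambda>a. - f a) \<in> Int0 scale n e"
proof -
  obtain x where "x \<in> span (e ` {1..n})" "f = (\<lambda>a. x * a - a * x)"
    using assms unfolding Int0_def by blast
  moreover have "(\<lambda>a. - (x * a - a * x)) = (\<lambda>a. (- x) * a - a * (- x))" by simp
  ultimately show ?thesis unfolding Int0_def using span_neg by blast
qed

lemma hh_class_eq:
  assumes d12: "(\<lambda>a. d1 a - d2 a) \<in> Int0 scale n e"
  shows "hh_class scale n e d1 = hh_class scale n e d2"
proof -
  have "(\<lambda>a. g a - d2 a) \<in> Int0 scale n e" if "(\<lambda>a. g a - d1 a) \<in> Int0 scale n e" for g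
    using Int0_add[OF that d12] by simp
  moreover have "(\<lambda>a. g a - d1 a) \<in> Int0 scale n e" if "(\<lambda>a. g a - d2 a) \<in> Int0 scale n e" for g
    using Int0_add[OF that Int0_uminus[OF d12]] by simp
  ultimately show ?thesis unfolding hh_class_def by blast
qed

lemma presentation_arrows_in_corners: "presentation n Q1 s t scale e \<phi> \<Longrightarrow> arrows_in_corners \<phi>"
  unfolding presentation_def arrows_in_corners_def by blast

lemma presentation_span_path_vals:
  "presentation n Q1 s t scale e \<phi> \<Longrightarrow> span (path_vals \<phi> 0) = UNIV"
  unfolding presentation_def pa_map_surj_iff by blast

lemma presentation_long_paths_vanish:
  assumes "presentation n Q1 s t scale e \<phi>"
  obtains N where "path_vals \<phi> N \<subseteq> {0}"
proof -
  obtain N where N: "arrow_ideal_pow n Q1 s t N \<subseteq> pa_kernel n Q1 s t scale e \<phi>"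
    using assms unfolding presentation_def by blast
  have "path_vals \<phi> N \<subseteq> {0}"
  proof
    fix v assume "v \<in> path_vals \<phi> N"
    then obtain p where p: "v = path_val e \<phi> (fst p) (snd p)" "is_path n Q1 s t p" "N \<le> length (snd p)"
      unfolding path_vals_def by auto
    let ?\<rho> = "\<lambda>q. if q = p then 1 else 0"
    have "?\<rho> \<in> arrow_ideal_pow n Q1 s t N"
      unfolding arrow_ideal_pow_def using pa_map_path_indicator(1)[OF p(2)] p(3) by auto
    then show "v \<in> {0}" using N pa_map_path_indicator(2)[OF p(2)] p(1) unfolding pa_kernel_def by auto
  qed
  then show thesis by (rule that)
qed

text \<open>Nonempty paths span a nilpotent ideal, hence lie in the radical.\<close>
lemma presentation_path_vals_in_rad:
  assumes p: "presentation n Q1 s t scale e \<phi>"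
  shows "span (path_vals \<phi> 1) \<subseteq> rad"
proof
  fix x assume x: "x \<in> span (path_vals \<phi> 1)"
  have c: "arrows_in_corners \<phi>" using p by (rule presentation_arrows_in_corners)
  obtain N where N: "path_vals \<phi> N \<subseteq> {0}" using p by (rule presentation_long_paths_vanish)
  show "x \<in> rad"
  proof (rule in_rad_if_right_nilpotent)
    fix a :: 'a
    have "a \<in> span (path_vals \<phi> 0)" using presentation_span_path_vals[OF p] by simp
    then have xa: "x * a \<in> span (path_vals \<phi> 1)" using span_path_vals_mult[OF c x] by simp
    have "(x * a) ^ Suc k \<in> span (path_vals \<phi> (Suc k))" for k
    proof (induction k)
      case (Suc k)
      have "(x * a) ^ Suc (Suc k) = (x * a) ^ Suc k * (x * a)" by (rule power_Suc2)
      also have "\<dots> \<in> span (path_vals \<phi> (Suc k + 1))" by (rule span_path_vals_mult[OF c Suc xa])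
      finally show ?case by simp
    qed (use xa in simp)
    moreover have "span (path_vals \<phi> (Suc N)) \<subseteq> {0}"
      using span_mono[OF subset_trans[OF path_vals_antimono N]] by simp
    ultimately show "\<exists>N. (x * a) ^ N = 0" by blast
  qed
qed

lemma presentation_path_basis:
  assumes p: "presentation n Q1 s t scale e \<phi>"
  obtains B where "algebra_basis scale n e B" "B \<subseteq> path_vals \<phi> 0"
proof -
  have c: "arrows_in_corners \<phi>" using p by (rule presentation_arrows_in_corners)
  obtain B where B: "e ` {1..n} \<subseteq> B" "B \<subseteq> path_vals \<phi> 0" "independent B" "path_vals \<phi> 0 \<subseteq> span B"
    using maximal_independent_subset_extend[OF e_in_path_vals independent_e] by blast
  have "span B = UNIV"
    using presentation_span_path_vals[OF p] span_minimal[OF B(4)] by auto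
  moreover have "\<exists>i\<in>{1..n}. \<exists>j\<in>{1..n}. b \<in> corner e j i UNIV" "b \<notin> e ` {1..n} \<Longrightarrow> b \<in> rad"
    if "b \<in> B" for b
  proof -
    obtain x ps y where b: "b = path_val e \<phi> x ps" "x \<in> {1..n}" "path_from Q1 s t x ps y"
      using B(2) \<open>b \<in> B\<close> unfolding path_vals_def is_path_def by auto
    have "b = e y * b * e x" using path_val_in_corner[OF c b(3,2)] b(1) by simp
    then show "\<exists>i\<in>{1..n}. \<exists>j\<in>{1..n}. b \<in> corner e j i UNIV"
      using b(2) path_from_end_vertex[OF b(3,2)] unfolding corner_def by blast
    assume "b \<notin> e ` {1..n}"
    then have "ps \<noteq> []" using b(1,2) unfolding path_val_def by auto
    then have "b \<in> path_vals \<phi> 1"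
      using b unfolding path_vals_def is_path_def by (auto simp: Suc_le_eq)
    then show "b \<in> rad" using presentation_path_vals_in_rad[OF p] span_base by blast
  qed
  ultimately have "algebra_basis scale n e B"
    unfolding algebra_basis_def using B(1,3) by blast
  then show thesis using B(2) by (rule that)
qed

theorem diagonalizable_if_subset_theta_image:
  assumes p: "presentation n Q1 s t scale e \<phi>" and D: "D \<subseteq> theta_image n Q1 s t scale e \<phi> x0 \<gamma>"
  shows "diagonalizable scale n e D"
proof -
  obtain B where B: "algebra_basis scale n e B" "B \<subseteq> path_vals \<phi> 0" by (rule presentation_path_basis[OF p])
  have "\<exists>d\<in>c. \<forall>b\<in>B. \<exists>\<mu>. d b = scale \<mu> b" if "c \<in> D" for c
  proof -
    obtain f d where d: "d \<in> Der0 scale n e" "c = hh_class scale n e d"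
      "\<And>x y ps. x \<in> {1..n} \<Longrightarrow> path_from Q1 s t x ps y \<Longrightarrow>
           d (path_val e \<phi> x ps) = scale (f (\<gamma> x @ path_walk ps @ walk_inv (\<gamma> y))) (path_val e \<phi> x ps)"
      using \<open>c \<in> D\<close> D unfolding theta_image_def by blast
    have "\<forall>b\<in>B. \<exists>\<mu>. d b = scale \<mu> b"
      using B(2) d(3) unfolding path_vals_def is_path_def by fastforce
    then show ?thesis using hh_class_self[OF d(1)] d(2) by blast
  qed
  then show ?thesis using B(1) unfolding diagonalizable_def by blast
qed

end

section \<open>From a diagonalising basis to a presentation\<close>

context quiver_algebra
begin

lemma algebra_basis_in_corner:
  assumes B: "algebra_basis scale n e B" and b: "b \<in> B"
  obtains i j where "i \<in> {1..n}" "j \<in> {1..n}" "e j * b * e i = b"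
proof -
  obtain i j y where ij: "i \<in> {1..n}" "j \<in> {1..n}" "b = e j * y * e i"
    using B b unfolding algebra_basis_def corner_def by blast
  then have "e j * b * e i = (e j * e j) * y * (e i * e i)" by (simp add: mult.assoc)
  then show thesis using that ij e_idem by simp
qed

lemma rad_subset_span_basis:
  assumes B: "algebra_basis scale n e B" shows "rad \<subseteq> span (B - e ` {1..n})"
proof
  fix w :: 'a assume w: "w \<in> rad"
  have "B = e ` {1..n} \<union> (B - e ` {1..n})" using B unfolding algebra_basis_def by blast
  then have "w \<in> span (e ` {1..n} \<union> (B - e ` {1..n}))" using B unfolding algebra_basis_def by simp
  then obtain u v where uv: "w = u + v" "u \<in> span (e ` {1..n})" "v \<in> span (B - e ` {1..n})"
    unfolding span_Un by blast
  have "v \<in> rad" using uv(3) span_minimal[OF _ subspace_rad] B unfolding algebra_basis_def by blast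
  then have "u \<in> rad" using w uv(1) rad_diff by (metis add_diff_cancel_right')
  then have "u = 0" using span_e_inter_rad uv(2) by blast
  then show "w \<in> span (B - e ` {1..n})" using uv by simp
qed

lemma corner_rad_eq_span_basis:
  assumes B: "algebra_basis scale n e B" and ij: "i \<in> {1..n}" "j \<in> {1..n}"
  shows "corner e j i rad = span {b \<in> B - e ` {1..n}. e j * b * e i = b}"
    (is "_ = span ?Bij")
proof
  have "e j * b * e i \<in> span ?Bij" if b: "b \<in> B - e ` {1..n}" for b
  proof -
    obtain i' j' where ij': "i' \<in> {1..n}" "j' \<in> {1..n}" "e j' * b * e i' = b"
      using algebra_basis_in_corner[OF B] b by blast
    have "e j * b * e i = (e j * e j') * b * (e i' * e i)" using ij'(3) by (metis mult.assoc)
    also have "\<dots> = (if i = i' \<and> j = j' then e j' * b * e i' else 0)"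
      using e_mult[OF ij(2) ij'(2)] e_mult[OF ij'(1) ij(1)] by auto
    finally have "e j * b * e i = (if i = i' \<and> j = j' then b else 0)" using ij'(3) by simp
    then show ?thesis using b ij' by (auto intro: span_base span_zero)
  qed
  moreover have "subspace {r. e j * r * e i \<in> span ?Bij}"
    unfolding subspace_def
    by (auto simp: distrib_left distrib_right span_zero span_add scale_mult_mid span_scale)
  ultimately have "e j * r * e i \<in> span ?Bij" if "r \<in> span (B - e ` {1..n})" for r
    using span_induct[OF that, of "\<lambda>r. e j * r * e i \<in> span ?Bij"] by blast
  then show "corner e j i rad \<subseteq> span ?Bij"
    unfolding corner_def using rad_subset_span_basis[OF B] by blast
next
  have "?Bij \<subseteq> corner e j i rad"
  proof
    fix b assume b: "b \<in> ?Bij"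
    then have "b \<in> rad" using B unfolding algebra_basis_def by blast
    then have "e j * b * e i \<in> corner e j i rad" unfolding corner_def by blast
    then show "b \<in> corner e j i rad" using b by simp
  qed
  then show "span ?Bij \<subseteq> corner e j i rad" by (rule span_minimal[OF _ subspace_corner[OF subspace_rad]])
qed

definition arrows_between :: "nat \<Rightarrow> nat \<Rightarrow> 'q set" where
  "arrows_between i j = {\<alpha>\<in>Q1. s \<alpha> = i \<and> t \<alpha> = j}"

definition corner_arrow_basis :: "'a set \<Rightarrow> ('q \<Rightarrow> 'a) \<Rightarrow> nat \<Rightarrow> nat \<Rightarrow> bool" where
  "corner_arrow_basis B \<phi> i j \<longleftrightarrow>
    (\<forall>\<alpha>\<in>arrows_between i j. \<phi> \<alpha> \<in> B - e ` {1..n} \<and> e j * \<phi> \<alpha> * e i = \<phi> \<alpha>) \<and>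
    corner e j i rad \<subseteq> {a + w | a w. a \<in> span (\<phi> ` arrows_between i j) \<and> w \<in> corner e j i (rad_sq scale)} \<and>
    (\<forall>u. (\<Sum>\<alpha>\<in>arrows_between i j. scale (u \<alpha>) (\<phi> \<alpha>)) \<in> corner e j i (rad_sq scale)
       \<longrightarrow> (\<forall>\<alpha>\<in>arrows_between i j. u \<alpha> = 0))"

lemma corner_arrow_basis_cong:
  "(\<And>\<alpha>. \<alpha> \<in> arrows_between i j \<Longrightarrow> \<phi> \<alpha> = \<psi> \<alpha>) \<Longrightarrow> corner_arrow_basis B \<phi> i j = corner_arrow_basis B \<psi> i j"
  unfolding corner_arrow_basis_def by (simp cong: image_cong sum.cong)

text \<open>This is where the ordinary quiver enters: it has exactly as many arrows i \<rightarrow> j as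
  elements of e_j B e_i are needed to complete a basis of e_j r^2 e_i to one of e_j r e_i.\<close>
lemma exists_corner_arrow_basis:
  assumes B: "algebra_basis scale n e B" and ij: "i \<in> {1..n}" "j \<in> {1..n}"
    and card: "card (arrows_between i j) = dim (corner e j i rad) - dim (corner e j i (rad_sq scale))"
  obtains h where "corner_arrow_basis B h i j"
proof -
  let ?Bij = "{b \<in> B - e ` {1..n}. e j * b * e i = b}"
  let ?W = "corner e j i (rad_sq scale)"
  have span_Bij: "span ?Bij = corner e j i rad" using corner_rad_eq_span_basis[OF B ij] by simp
  have fin: "finite ?Bij"
    using B finite_if_independent unfolding algebra_basis_def by (auto intro: finite_subset)
  have W: "subspace ?W" "?W \<subseteq> span ?Bij"
    using subspace_corner[OF subspace_rad_sq] corner_mono[OF rad_sq_subset_rad] span_Bij by auto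
  obtain A where A: "card A = dim (span ?Bij) - dim ?W" "A \<subseteq> ?Bij"
    "span ?Bij \<subseteq> {a + w | a w. a \<in> span A \<and> w \<in> ?W}"
    "\<And>u. (\<Sum>a\<in>A. scale (u a) a) \<in> ?W \<Longrightarrow> \<forall>a\<in>A. u a = 0"
    using exists_complement_mod_subspace[OF fin W] by blast
  have "finite (arrows_between i j)" unfolding arrows_between_def using finite_arrows by simp
  moreover have "card (arrows_between i j) = card A" using A(1) card unfolding span_Bij by simp
  ultimately obtain h where h: "bij_betw h (arrows_between i j) A"
    using finite_same_card_bij finite_subset[OF A(2) fin] by blast
  have "\<forall>\<alpha>\<in>arrows_between i j. u \<alpha> = 0"
    if u: "(\<Sum>\<alpha>\<in>arrows_between i j. scale (u \<alpha>) (h \<alpha>)) \<in> ?W" for u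
  proof -
    let ?g = "inv_into (arrows_between i j) h"
    have "(\<Sum>\<alpha>\<in>arrows_between i j. scale (u \<alpha>) (h \<alpha>)) = (\<Sum>a\<in>A. scale (u (?g a)) a)"
      using sum.reindex_bij_betw[OF h, of "\<lambda>a. scale (u (?g a)) a"] h
      by (simp add: bij_betw_inv_into_left cong: sum.cong)
    then have "\<forall>a\<in>A. u (?g a) = 0" using A(4) u by simp
    then show ?thesis using h by (metis bij_betw_apply bij_betw_inv_into_left)
  qed
  moreover have "\<forall>\<alpha>\<in>arrows_between i j. h \<alpha> \<in> B - e ` {1..n} \<and> e j * h \<alpha> * e i = h \<alpha>"
    using bij_betw_apply[OF h] A(2) by blast
  moreover have "corner e j i rad \<subseteq> {a + w | a w. a \<in> span (h ` arrows_between i j) \<and> w \<in> ?W}"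
    using A(3) span_Bij bij_betw_imp_surj_on[OF h] by simp
  ultimately show thesis using that unfolding corner_arrow_basis_def by blast
qed

lemma exists_arrow_images:
  assumes B: "algebra_basis scale n e B"
    and card: "\<forall>i\<in>{1..n}. \<forall>j\<in>{1..n}. card (arrows_between i j) =
      dim (corner e j i rad) - dim (corner e j i (rad_sq scale))"
  obtains \<phi> where "\<And>i j. i \<in> {1..n} \<Longrightarrow> j \<in> {1..n} \<Longrightarrow> corner_arrow_basis B \<phi> i j"
proof -
  have "\<exists>h. corner_arrow_basis B h i j" if ij: "i \<in> {1..n}" "j \<in> {1..n}" for i j
  proof -
    obtain h where "corner_arrow_basis B h i j"
      by (rule exists_corner_arrow_basis[OF B ij]) (use card ij in blast)
    then show ?thesis by blast
  qed
  then have "\<forall>ij\<in>{1..n} \<times> {1..n}. \<exists>h. corner_arrow_basis B h (fst ij) (snd ij)" by auto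
  then have "\<exists>H. \<forall>ij\<in>{1..n} \<times> {1..n}. corner_arrow_basis B (H ij) (fst ij) (snd ij)" by (rule bchoice)
  then obtain H where "\<forall>ij\<in>{1..n} \<times> {1..n}. corner_arrow_basis B (H ij) (fst ij) (snd ij)" ..
  then have H: "corner_arrow_basis B (H (i, j)) i j" if "i \<in> {1..n}" "j \<in> {1..n}" for i j
    using that by auto
  have "corner_arrow_basis B (\<lambda>\<alpha>. H (s \<alpha>, t \<alpha>) \<alpha>) i j" if "i \<in> {1..n}" "j \<in> {1..n}" for i j
  proof -
    have "corner_arrow_basis B (\<lambda>\<alpha>. H (s \<alpha>, t \<alpha>) \<alpha>) i j = corner_arrow_basis B (H (i, j)) i j"
      by (rule corner_arrow_basis_cong) (simp add: arrows_between_def)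
    then show ?thesis using H[OF that] by simp
  qed
  then show thesis by (rule that)
qed

lemma corner_arrow_basis_arrow:
  assumes \<phi>: "\<And>i j. i \<in> {1..n} \<Longrightarrow> j \<in> {1..n} \<Longrightarrow> corner_arrow_basis B \<phi> i j" and \<alpha>: "\<alpha> \<in> Q1"
  shows "\<phi> \<alpha> \<in> B - e ` {1..n}" "e (t \<alpha>) * \<phi> \<alpha> * e (s \<alpha>) = \<phi> \<alpha>"
  using \<phi>[of "s \<alpha>" "t \<alpha>"] \<alpha> arrow_ends unfolding corner_arrow_basis_def arrows_between_def by auto

lemma corner_of_arrow:
  assumes c: "arrows_in_corners \<phi>" and ij: "i \<in> {1..n}" "j \<in> {1..n}" and \<alpha>: "\<alpha> \<in> Q1"
  shows "e j * \<phi> \<alpha> * e i = (if \<alpha> \<in> arrows_between i j then \<phi> \<alpha> else 0)"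
proof -
  have \<phi>\<alpha>: "e (t \<alpha>) * \<phi> \<alpha> * e (s \<alpha>) = \<phi> \<alpha>"
    using c \<alpha> unfolding arrows_in_corners_def by simp
  have st: "s \<alpha> \<in> {1..n}" "t \<alpha> \<in> {1..n}" using arrow_ends \<alpha> by auto
  have "e j * \<phi> \<alpha> * e i = e j * (e (t \<alpha>) * \<phi> \<alpha> * e (s \<alpha>)) * e i" by (simp only: \<phi>\<alpha>)
  also have "\<dots> = (e j * e (t \<alpha>)) * \<phi> \<alpha> * (e (s \<alpha>) * e i)" by (simp only: mult.assoc)
  also have "\<dots> = (if \<alpha> \<in> arrows_between i j then \<phi> \<alpha> else 0)"
  proof (cases "\<alpha> \<in> arrows_between i j")
    case True
    then show ?thesis
      using e_idem[OF ij(1)] e_idem[OF ij(2)] \<phi>\<alpha> unfolding arrows_between_def by (auto simp: mult.assoc)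
  next
    case False
    then have "e j * e (t \<alpha>) = 0 \<or> e (s \<alpha>) * e i = 0"
      using e_mult[OF ij(2) st(2)] e_mult[OF st(1) ij(1)] \<alpha> unfolding arrows_between_def by auto
    then show ?thesis using False by auto
  qed
  finally show ?thesis .
qed

lemma corner_arrow_sum:
  assumes c: "arrows_in_corners \<phi>" and ij: "i \<in> {1..n}" "j \<in> {1..n}"
  shows "e j * (\<Sum>\<alpha>\<in>Q1. scale (u \<alpha>) (\<phi> \<alpha>)) * e i = (\<Sum>\<alpha>\<in>arrows_between i j. scale (u \<alpha>) (\<phi> \<alpha>))"
proof -
  have "e j * (\<Sum>\<alpha>\<in>Q1. scale (u \<alpha>) (\<phi> \<alpha>)) * e i = (\<Sum>\<alpha>\<in>Q1. scale (u \<alpha>) (e j * \<phi> \<alpha> * e i))"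
    by (simp add: sum_distrib_left sum_distrib_right scale_mult_mid)
  also have "\<dots> = (\<Sum>\<alpha>\<in>Q1. if \<alpha> \<in> arrows_between i j then scale (u \<alpha>) (\<phi> \<alpha>) else 0)"
    using corner_of_arrow[OF c ij] by (intro sum.cong) auto
  also have "\<dots> = (\<Sum>\<alpha>\<in>arrows_between i j. scale (u \<alpha>) (\<phi> \<alpha>))"
    unfolding arrows_between_def using finite_arrows by (simp add: sum.inter_filter)
  finally show ?thesis .
qed

lemma rad_subset_span_arrows:
  assumes \<phi>: "\<And>i j. i \<in> {1..n} \<Longrightarrow> j \<in> {1..n} \<Longrightarrow> corner_arrow_basis B \<phi> i j"
  shows "rad \<subseteq> {a + w | a w. a \<in> span (\<phi> ` Q1) \<and> w \<in> rad_sq scale}" (is "_ \<subseteq> ?S")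
proof
  fix w :: 'a assume w: "w \<in> rad"
  have "e j * w * e i \<in> ?S" if ij: "i \<in> {1..n}" "j \<in> {1..n}" for i j
  proof -
    have "e j * w * e i \<in> corner e j i rad" using w unfolding corner_def by blast
    then obtain a k where ak: "e j * w * e i = a + k" "k \<in> corner e j i (rad_sq scale)"
      "a \<in> span (\<phi> ` arrows_between i j)"
      using \<phi>[OF ij] unfolding corner_arrow_basis_def by blast
    have "\<phi> ` arrows_between i j \<subseteq> \<phi> ` Q1" unfolding arrows_between_def by blast
    then have "a \<in> span (\<phi> ` Q1)" using ak(3) span_mono by blast
    moreover have "k \<in> rad_sq scale" using ak(2) corner_rad_sq_subset by blast
    ultimately show ?thesis using ak(1) by blast
  qed
  then have "(\<Sum>i\<in>{1..n}. \<Sum>j\<in>{1..n}. e j * w * e i) \<in> ?S"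
    by (intro subspace_sum subspace_sums subspace_span subspace_rad_sq) auto
  then show "w \<in> ?S" using corner_decomposition[of w] by simp
qed

lemma arrows_independent_mod_rad_sq:
  assumes \<phi>: "\<And>i j. i \<in> {1..n} \<Longrightarrow> j \<in> {1..n} \<Longrightarrow> corner_arrow_basis B \<phi> i j"
    and c: "arrows_in_corners \<phi>" and u: "(\<Sum>\<alpha>\<in>Q1. scale (u \<alpha>) (\<phi> \<alpha>)) \<in> rad_sq scale"
  shows "\<forall>\<alpha>\<in>Q1. u \<alpha> = 0"
proof
  fix \<alpha> assume \<alpha>: "\<alpha> \<in> Q1"
  then have ij: "s \<alpha> \<in> {1..n}" "t \<alpha> \<in> {1..n}" using arrow_ends by auto
  have "e (t \<alpha>) * (\<Sum>\<beta>\<in>Q1. scale (u \<beta>) (\<phi> \<beta>)) * e (s \<alpha>) \<in> corner e (t \<alpha>) (s \<alpha>) (rad_sq scale)"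
    using u unfolding corner_def by blast
  then have "(\<Sum>\<beta>\<in>arrows_between (s \<alpha>) (t \<alpha>). scale (u \<beta>) (\<phi> \<beta>)) \<in> corner e (t \<alpha>) (s \<alpha>) (rad_sq scale)"
    unfolding corner_arrow_sum[OF c ij] .
  then show "u \<alpha> = 0"
    using \<phi>[OF ij] \<alpha> unfolding corner_arrow_basis_def arrows_between_def by blast
qed

lemma span_path_vals_if_generate:
  assumes c: "arrows_in_corners \<phi>" and \<phi>: "\<forall>\<alpha>\<in>Q1. \<phi> \<alpha> \<in> rad"
    and gen: "rad \<subseteq> {a + w | a w. a \<in> span (\<phi> ` Q1) \<and> w \<in> rad_sq scale}"
    and A: "UNIV \<subseteq> span (e ` {1..n} \<union> rad)"
  shows "span (path_vals \<phi> 0) = UNIV"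
proof -
  let ?J = "span (path_vals \<phi> 1)"
  have "rad \<subseteq> ?J"
  proof (rule rad_subset_if_generates_mod_rad_sq)
    show "subspace ?J" by simp
    have "?J \<subseteq> rad_pow 1"
      by (rule span_minimal[OF path_vals_subset_rad_pow[OF c \<phi>] subspace_rad_pow])
    then show "?J \<subseteq> rad" unfolding rad_pow_1 .
    show "x * y \<in> ?J" if "x \<in> ?J" "y \<in> ?J" for x y
    proof -
      have "x * y \<in> span (path_vals \<phi> (1 + 1))" by (rule span_path_vals_mult[OF c that])
      moreover have "span (path_vals \<phi> (1 + 1)) \<subseteq> ?J" by (intro span_mono path_vals_antimono) simp
      ultimately show ?thesis by blast
    qed
    have "span (\<phi> ` Q1) \<subseteq> ?J" by (rule span_mono) (use arrow_in_path_vals in blast)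
    then show "rad \<subseteq> {a + w | a w. a \<in> ?J \<and> w \<in> rad_sq scale}" using gen by blast
  qed
  moreover have "?J \<subseteq> span (path_vals \<phi> 0)" by (intro span_mono path_vals_antimono) simp
  moreover have "e ` {1..n} \<subseteq> span (path_vals \<phi> 0)" using e_in_path_vals span_superset by blast
  ultimately have "span (e ` {1..n} \<union> rad) \<subseteq> span (path_vals \<phi> 0)"
    by (intro span_minimal) auto
  then show ?thesis using A by blast
qed

lemma long_paths_in_kernel:
  assumes c: "arrows_in_corners \<phi>" and \<phi>: "\<forall>\<alpha>\<in>Q1. \<phi> \<alpha> \<in> rad"
  obtains N where "N \<ge> 2" "arrow_ideal_pow n Q1 s t N \<subseteq> pa_kernel n Q1 s t scale e \<phi>"
proof -
  obtain N where N: "1 \<le> N" "rad_pow N = {0}" by (rule rad_pow_nilpotent)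
  have "path_vals \<phi> N \<subseteq> {0}" using path_vals_subset_rad_pow[OF c \<phi>] N(2) by blast
  have "\<rho> \<in> pa_kernel n Q1 s t scale e \<phi>" if \<rho>: "\<rho> \<in> arrow_ideal_pow n Q1 s t (N + 2)" for \<rho>
  proof -
    have "path_val e \<phi> (fst p) (snd p) = 0" if "\<rho> p \<noteq> 0" for p
    proof -
      have "is_path n Q1 s t p" "N + 2 \<le> length (snd p)"
        using \<rho> that unfolding arrow_ideal_pow_def pa_elem_def by blast+
      moreover obtain x ps where "p = (x, ps)" by (cases p)
      ultimately have "path_val e \<phi> (fst p) (snd p) \<in> path_vals \<phi> N"
        unfolding path_vals_def by (auto intro!: exI[of _ x] exI[of _ ps])
      then show ?thesis using \<open>path_vals \<phi> N \<subseteq> {0}\<close> by blast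
    qed
    then have "pa_map scale e \<phi> \<rho> = 0" unfolding pa_map_def by (intro sum.neutral) simp
    then show ?thesis using \<rho> unfolding pa_kernel_def arrow_ideal_pow_def by blast
  qed
  then show thesis by (intro that[of "N + 2"]) auto
qed

lemma pa_elem_support:
  assumes "pa_elem n Q1 s t \<rho>" "\<rho> (x, ps) \<noteq> 0"
  shows "x \<in> {1..n}" "ps = [] \<or> (\<exists>\<alpha>\<in>Q1. ps = [\<alpha>] \<and> x = s \<alpha>) \<or> 2 \<le> length ps"
proof -
  obtain y where "x \<in> {1..n}" "path_from Q1 s t x ps y"
    using assms unfolding pa_elem_def is_path_def by fastforce
  moreover have "ps = [] \<or> (\<exists>\<alpha>. ps = [\<alpha>]) \<or> 2 \<le> length ps"
    by (cases ps rule: remdups_adj.cases) auto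
  ultimately show "x \<in> {1..n}" "ps = [] \<or> (\<exists>\<alpha>\<in>Q1. ps = [\<alpha>] \<and> x = s \<alpha>) \<or> 2 \<le> length ps"
    by auto
qed

lemma pa_map_decompose:
  assumes c: "arrows_in_corners \<phi>" and \<phi>: "\<forall>\<alpha>\<in>Q1. \<phi> \<alpha> \<in> rad" and \<rho>: "pa_elem n Q1 s t \<rho>"
  obtains r where "r \<in> rad_sq scale" "pa_map scale e \<phi> \<rho> =
    (\<Sum>k\<in>{1..n}. scale (\<rho> (k, [])) (e k)) + (\<Sum>\<alpha>\<in>Q1. scale (\<rho> (s \<alpha>, [\<alpha>])) (\<phi> \<alpha>)) + r"
proof -
  define g where "g p = scale (\<rho> p) (path_val e \<phi> (fst p) (snd p))" for p
  define G0 where "G0 = (\<lambda>k. (k, [] :: 'q list)) ` {1..n}"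
  define G1 where "G1 = (\<lambda>\<alpha>. (s \<alpha>, [\<alpha>])) ` Q1"
  define H2 where "H2 = {p. \<rho> p \<noteq> 0 \<and> 2 \<le> length (snd p)}"
  have fin: "finite G0" "finite G1" "finite H2"
    using \<rho> finite_arrows unfolding G0_def G1_def H2_def pa_elem_def by auto
  have "{p. \<rho> p \<noteq> 0} \<subseteq> G0 \<union> G1 \<union> H2"
  proof
    fix p assume p: "p \<in> {p. \<rho> p \<noteq> 0}"
    obtain x ps where xps: "p = (x, ps)" by (cases p)
    then show "p \<in> G0 \<union> G1 \<union> H2"
      using pa_elem_support[OF \<rho>, of x ps] p unfolding G0_def G1_def H2_def by auto
  qed
  moreover have "G0 \<inter> G1 = {}" "(G0 \<union> G1) \<inter> H2 = {}" unfolding G0_def G1_def H2_def by auto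
  ultimately have "pa_map scale e \<phi> \<rho> = sum g G0 + sum g G1 + sum g H2"
    using pa_map_eq_sum_superset[of "G0 \<union> G1 \<union> H2" \<rho> \<phi>] fin unfolding g_def
    by (simp add: sum.union_disjoint)
  moreover have "sum g G0 = (\<Sum>k\<in>{1..n}. scale (\<rho> (k, [])) (e k))"
    unfolding G0_def g_def by (subst sum.reindex) (auto simp: inj_on_def path_val_def)
  moreover have "sum g G1 = (\<Sum>\<alpha>\<in>Q1. scale (\<rho> (s \<alpha>, [\<alpha>])) (\<phi> \<alpha>))"
    unfolding G1_def g_def by (subst sum.reindex) (auto simp: inj_on_def path_val_def)
  moreover have "sum g H2 \<in> rad_sq scale"
  proof (rule subspace_sum[OF subspace_rad_sq])
    fix p assume p: "p \<in> H2"
    then obtain y where "path_from Q1 s t (fst p) (snd p) y"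
      using \<rho> unfolding H2_def pa_elem_def is_path_def by blast
    then have "path_val e \<phi> (fst p) (snd p) \<in> rad_pow 2"
      using path_val_in_rad_pow[OF c \<phi>] rad_pow_antimono p unfolding H2_def by blast
    then show "g p \<in> rad_sq scale"
      unfolding g_def rad_pow_2 by (rule subspace_scale[OF subspace_rad_sq])
  qed
  ultimately show thesis using that[of "sum g H2"] by simp
qed

lemma kernel_subset_arrow_ideal_pow_2:
  assumes c: "arrows_in_corners \<phi>" and \<phi>: "\<forall>\<alpha>\<in>Q1. \<phi> \<alpha> \<in> rad"
    and indep: "\<And>u. (\<Sum>\<alpha>\<in>Q1. scale (u \<alpha>) (\<phi> \<alpha>)) \<in> rad_sq scale \<Longrightarrow> \<forall>\<alpha>\<in>Q1. u \<alpha> = 0"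
  shows "pa_kernel n Q1 s t scale e \<phi> \<subseteq> arrow_ideal_pow n Q1 s t 2"
proof
  fix \<rho> assume "\<rho> \<in> pa_kernel n Q1 s t scale e \<phi>"
  then have \<rho>: "pa_elem n Q1 s t \<rho>" "pa_map scale e \<phi> \<rho> = 0" unfolding pa_kernel_def by auto
  let ?T0 = "\<Sum>k\<in>{1..n}. scale (\<rho> (k, [])) (e k)" and ?T1 = "\<Sum>\<alpha>\<in>Q1. scale (\<rho> (s \<alpha>, [\<alpha>])) (\<phi> \<alpha>)"
  obtain r where "r \<in> rad_sq scale" "pa_map scale e \<phi> \<rho> = ?T0 + ?T1 + r"
    by (rule pa_map_decompose[OF c \<phi> \<rho>(1)])
  then have r: "r \<in> rad_sq scale" "?T0 + ?T1 + r = 0" using \<rho>(2) by simp_all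
  have T1: "?T1 \<in> rad" using \<phi> by (intro subspace_sum[OF subspace_rad] rad_scale) auto
  have "?T0 = - (?T1 + r)" using r(2) unfolding add.assoc by (simp only: eq_neg_iff_add_eq_0)
  moreover have "- (?T1 + r) \<in> rad" using rad_uminus rad_add[OF T1] rad_sq_subset_rad r(1) by blast
  ultimately have "?T0 \<in> rad" by (simp only:)
  then have trivial: "\<rho> (k, []) = 0" if "k \<in> {1..n}" for k
    using idempotent_comb_in_rad[of "\<lambda>k. \<rho> (k, [])"] that by blast
  then have "?T1 + r = 0" using r(2) by simp
  then have "?T1 = - r" by (simp only: eq_neg_iff_add_eq_0)
  then have "?T1 \<in> rad_sq scale" using r(1) subspace_neg[OF subspace_rad_sq] by simp
  then have arrows: "\<rho> (s \<alpha>, [\<alpha>]) = 0" if "\<alpha> \<in> Q1" for \<alpha>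
    using indep[of "\<lambda>\<alpha>. \<rho> (s \<alpha>, [\<alpha>])"] that by blast
  have "2 \<le> length (snd p)" if "\<rho> p \<noteq> 0" for p
  proof -
    obtain x ps where "p = (x, ps)" by (cases p)
    then show ?thesis using pa_elem_support[OF \<rho>(1), of x ps] that trivial arrows by auto
  qed
  then show "\<rho> \<in> arrow_ideal_pow n Q1 s t 2" using \<rho>(1) unfolding arrow_ideal_pow_def by blast
qed

lemma presentation_if_arrow_images_generate:
  assumes c: "arrows_in_corners \<phi>" and \<phi>: "\<forall>\<alpha>\<in>Q1. \<phi> \<alpha> \<in> rad"
    and gen: "rad \<subseteq> {a + w | a w. a \<in> span (\<phi> ` Q1) \<and> w \<in> rad_sq scale}"
    and indep: "\<And>u. (\<Sum>\<alpha>\<in>Q1. scale (u \<alpha>) (\<phi> \<alpha>)) \<in> rad_sq scale \<Longrightarrow> \<forall>\<alpha>\<in>Q1. u \<alpha> = 0"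
    and A: "UNIV \<subseteq> span (e ` {1..n} \<union> rad)"
  shows "presentation n Q1 s t scale e \<phi>"
proof -
  have "\<forall>a. \<exists>\<rho>. pa_elem n Q1 s t \<rho> \<and> pa_map scale e \<phi> \<rho> = a"
    unfolding pa_map_surj_iff by (rule span_path_vals_if_generate[OF c \<phi> gen A])
  moreover obtain N where "N \<ge> 2" "arrow_ideal_pow n Q1 s t N \<subseteq> pa_kernel n Q1 s t scale e \<phi>"
    by (rule long_paths_in_kernel[OF c \<phi>])
  ultimately show ?thesis
    using c kernel_subset_arrow_ideal_pow_2[OF c \<phi> indep]
    unfolding presentation_def arrows_in_corners_def by blast
qed

end

section \<open>Derivations acting diagonally on the arrows\<close>

context quiver_algebra
begin

lemma Der0_linear: "d \<in> Der0 scale n e \<Longrightarrow> Vector_Spaces.linear scale scale d"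
  unfolding Der0_def Vector_Spaces.linear_iff using is_vector_space by blast

lemma derivation_path_val:
  assumes d: "d \<in> Der0 scale n e" and c: "arrows_in_corners \<phi>"
    and \<omega>: "\<forall>\<alpha>\<in>Q1. d (\<phi> \<alpha>) = scale (\<omega> \<alpha>) (\<phi> \<alpha>)"
    and x: "x \<in> {1..n}" and p: "path_from Q1 s t x ps y"
  shows "d (path_val e \<phi> x ps) = scale (path_weight \<omega> ps) (path_val e \<phi> x ps)"
  using p
proof (induction ps arbitrary: y rule: rev_induct)
  case Nil
  then show ?case using d x unfolding Der0_def path_val_def path_weight_def by simp
next
  case (snoc \<alpha> ps)
  then have p': "path_from Q1 s t x ps (s \<alpha>)" "\<alpha> \<in> Q1" using path_from_snoc by metis+
  have "d (\<phi> \<alpha> * path_val e \<phi> x ps) = d (\<phi> \<alpha>) * path_val e \<phi> x ps + \<phi> \<alpha> * d (path_val e \<phi> x ps)"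
    using d unfolding Der0_def by blast
  also have "\<dots> = scale (path_weight \<omega> ps + \<omega> \<alpha>) (\<phi> \<alpha> * path_val e \<phi> x ps)"
    using \<omega> p'(2) snoc.IH[OF p'(1)]
    by (simp add: scale_mult_left[symmetric] scale_mult_right[symmetric] scale_left_distrib add.commute)
  finally show ?case using path_val_snoc[OF c p'] by (simp add: path_weight_def)
qed

text \<open>Every path is an eigenvector of d with its weight as eigenvalue. Eigenvectors for distinct
  eigenvalues being independent, the paths of a given weight in a relation form a relation
  themselves, so minimality leaves only one weight.\<close>
lemma minimal_relation_weight:
  assumes d: "d \<in> Der0 scale n e" and c: "arrows_in_corners \<phi>"
    and \<omega>: "\<forall>\<alpha>\<in>Q1. d (\<phi> \<alpha>) = scale (\<omega> \<alpha>) (\<phi> \<alpha>)"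
    and mr: "minimal_relation n Q1 s t scale e \<phi> \<rho>"
    and r1: "\<rho> (x, ps) \<noteq> 0" and r2: "\<rho> (x', qs) \<noteq> 0"
  shows "path_weight \<omega> ps = path_weight \<omega> qs"
proof -
  interpret d: Vector_Spaces.linear scale scale d by (rule Der0_linear[OF d])
  let ?F = "{p. \<rho> p \<noteq> 0}"
  have \<rho>: "pa_elem n Q1 s t \<rho>" "pa_map scale e \<phi> \<rho> = 0"
    using mr unfolding minimal_relation_def pa_kernel_def by auto
  have fF: "finite ?F" using \<rho>(1) unfolding pa_elem_def by blast
  define L where "L p = path_weight \<omega> (snd p)" for p :: "nat \<times> 'q list"
  define v where "v p = scale (\<rho> p) (path_val e \<phi> (fst p) (snd p))" for p
  have "d (v p) = scale (L p) (v p)" if p: "p \<in> ?F" for p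
  proof -
    obtain y where "fst p \<in> {1..n}" "path_from Q1 s t (fst p) (snd p) y"
      using \<rho>(1) p unfolding pa_elem_def is_path_def by blast
    then show ?thesis
      unfolding v_def L_def using derivation_path_val[OF d c \<omega>] by (simp add: d.scale scale_left_commute)
  qed
  moreover have "(\<Sum>p\<in>?F. v p) = 0" using \<rho>(2) unfolding pa_map_def v_def .
  ultimately have "(\<Sum>p\<in>{p\<in>?F. L p = L (x, ps)}. v p) = 0"
    by (rule eigenvector_groups_sum_eq_0[OF Der0_linear[OF d] fF])
  define S where "S = {p\<in>?F. L p = L (x, ps)}"
  let ?\<rho>S = "\<lambda>p. if p \<in> S then \<rho> p else 0"
  have "{p. ?\<rho>S p \<noteq> 0} = S" unfolding S_def by auto
  then have "?\<rho>S \<in> pa_kernel n Q1 s t scale e \<phi>"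
    using \<rho>(1) \<open>(\<Sum>p\<in>{p\<in>?F. L p = L (x, ps)}. v p) = 0\<close>
    unfolding pa_kernel_def pa_elem_def pa_map_def v_def S_def by auto
  moreover have "S \<subseteq> ?F" "S \<noteq> {}" using r1 unfolding S_def by auto
  ultimately have "S = ?F" using mr unfolding minimal_relation_def by blast
  then have "(x', qs) \<in> S" using r2 by simp
  then show ?thesis unfolding S_def L_def by simp
qed

lemma walk_rel_weight:
  assumes d: "d \<in> Der0 scale n e" and c: "arrows_in_corners \<phi>"
    and \<omega>: "\<forall>\<alpha>\<in>Q1. d (\<phi> \<alpha>) = scale (\<omega> \<alpha>) (\<phi> \<alpha>)"
  shows "walk_rel n Q1 s t scale e \<phi> a b \<Longrightarrow> walk_weight \<omega> (snd a) = walk_weight \<omega> (snd b)"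
proof (induction rule: walk_rel.induct)
  case (minrel \<rho> x ps x' qs)
  then have "path_weight \<omega> ps = path_weight \<omega> qs" by (intro minimal_relation_weight[OF d c \<omega>])
  then show ?case by (simp add: walk_weight_path_walk)
next
  case (concat x w1 w2 y x' u v y')
  then show ?case by (simp add: walk_weight_append)
qed (simp_all add: walk_weight_def)

lemma Der0_add_inner:
  assumes d: "d \<in> Der0 scale n e" and z: "z = (\<Sum>i\<in>{1..n}. scale (c i) (e i))"
  shows "(\<lambda>a. d a + (z * a - a * z)) \<in> Der0 scale n e"
    and "hh_class scale n e (\<lambda>a. d a + (z * a - a * z)) = hh_class scale n e d"
proof -
  show "(\<lambda>a. d a + (z * a - a * z)) \<in> Der0 scale n e"
    unfolding Der0_def
  proof (intro CollectI conjI allI ballI)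
    fix a b show "d (a + b) + (z * (a + b) - (a + b) * z) = d a + (z * a - a * z) + (d b + (z * b - b * z))"
      using d unfolding Der0_def by (simp add: algebra_simps)
  next
    fix c a show "d (scale c a) + (z * scale c a - scale c a * z) = scale c (d a + (z * a - a * z))"
      using d unfolding Der0_def
      by (simp add: scale_right_distrib scale_right_diff_distrib scale_mult_left[symmetric] scale_mult_right[symmetric])
  next
    fix a b show "d (a * b) + (z * (a * b) - a * b * z) = (d a + (z * a - a * z)) * b + a * (d b + (z * b - b * z))"
      using d unfolding Der0_def by (simp add: algebra_simps)
  next
    fix i assume i: "i \<in> {1..n}"
    have "z * e i = e i * z"
      unfolding z using idempotent_comb_mult[OF i e_idem[OF i]] mult_idempotent_comb[OF i e_idem[OF i]] by simp
    then show "d (e i) + (z * e i - e i * z) = 0" using d i unfolding Der0_def by simp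
  qed
  have "z \<in> span (e ` {1..n})" unfolding z by (intro span_sum span_scale span_base) auto
  then have "(\<lambda>a. d a + (z * a - a * z) - d a) \<in> Int0 scale n e" unfolding Int0_def by auto
  then show "hh_class scale n e (\<lambda>a. d a + (z * a - a * z)) = hh_class scale n e d" by (rule hh_class_eq)
qed

text \<open>The weights of the arrows define the homomorphism f on walks; conjugating by the inner
  derivation of the sum of the f(\<gamma> x) e_x moves every path weight to the normalised form
  f(\<gamma> x . u . \<gamma> y\<inverse>) required by theta.\<close>
lemma hh_class_in_theta_image:
  assumes p: "presentation n Q1 s t scale e \<phi>" and d: "d \<in> Der0 scale n e"
    and diag: "\<forall>\<alpha>\<in>Q1. \<exists>\<mu>. d (\<phi> \<alpha>) = scale \<mu> (\<phi> \<alpha>)"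
  shows "hh_class scale n e d \<in> theta_image n Q1 s t scale e \<phi> x0 \<gamma>"
proof -
  have c: "arrows_in_corners \<phi>" using p by (rule presentation_arrows_in_corners)
  obtain \<omega> where \<omega>: "\<forall>\<alpha>\<in>Q1. d (\<phi> \<alpha>) = scale (\<omega> \<alpha>) (\<phi> \<alpha>)" using diag by metis
  define f where "f = walk_weight \<omega>"
  have f: "pi1_hom n Q1 s t scale e \<phi> x0 f"
    unfolding pi1_hom_def f_def using walk_rel_weight[OF d c \<omega>] by (auto simp: walk_weight_append)
  define z where "z = (\<Sum>i\<in>{1..n}. scale (- f (\<gamma> i)) (e i))"
  define d' where "d' a = d a + (z * a - a * z)" for a
  have d': "d' \<in> Der0 scale n e" "hh_class scale n e d' = hh_class scale n e d"
    using Der0_add_inner[OF d z_def] unfolding d'_def[abs_def] by auto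
  have "d' (path_val e \<phi> x ps) = scale (f (\<gamma> x @ path_walk ps @ walk_inv (\<gamma> y))) (path_val e \<phi> x ps)"
    if x: "x \<in> {1..n}" and ps: "path_from Q1 s t x ps y" for x y ps
  proof -
    let ?v = "path_val e \<phi> x ps"
    have y: "y \<in> {1..n}" using path_from_end_vertex ps x by blast
    have "z * ?v = scale (- f (\<gamma> y)) ?v"
      unfolding z_def by (rule idempotent_comb_mult[OF y e_mult_path_val[OF c ps x]])
    moreover have "?v * z = scale (- f (\<gamma> x)) ?v"
      unfolding z_def by (rule mult_idempotent_comb[OF x path_val_mult_e[OF c ps x]])
    moreover have "d ?v = scale (path_weight \<omega> ps) ?v" by (rule derivation_path_val[OF d c \<omega> x ps])
    ultimately have "d' ?v = scale (path_weight \<omega> ps - f (\<gamma> y) + f (\<gamma> x)) ?v"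
      unfolding d'_def by (simp add: scale_left_distrib scale_left_diff_distrib)
    then show ?thesis
      unfolding f_def by (simp add: walk_weight_append walk_weight_path_walk walk_weight_walk_inv)
  qed
  then show ?thesis unfolding theta_image_def using f d' by blast
qed

lemma exists_presentation_if_diagonalizable:
  assumes diag: "diagonalizable scale n e D" and D: "D \<subseteq> HH1 scale n e"
    and card: "\<forall>i\<in>{1..n}. \<forall>j\<in>{1..n}. card (arrows_between i j) =
      dim (corner e j i rad) - dim (corner e j i (rad_sq scale))"
  obtains \<phi> where "presentation n Q1 s t scale e \<phi>" "D \<subseteq> theta_image n Q1 s t scale e \<phi> x0 \<gamma>"
proof -
  obtain B where B: "algebra_basis scale n e B" and dB: "\<forall>c\<in>D. \<exists>d\<in>c. \<forall>b\<in>B. \<exists>\<mu>. d b = scale \<mu> b"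
    using diag unfolding diagonalizable_def by blast
  obtain \<phi> where \<phi>: "\<And>i j. i \<in> {1..n} \<Longrightarrow> j \<in> {1..n} \<Longrightarrow> corner_arrow_basis B \<phi> i j"
    using exists_arrow_images[OF B card] by blast
  have \<phi>B: "\<forall>\<alpha>\<in>Q1. \<phi> \<alpha> \<in> B - e ` {1..n}" and c: "arrows_in_corners \<phi>"
    using corner_arrow_basis_arrow[OF \<phi>] unfolding arrows_in_corners_def by auto
  note gen = rad_subset_span_arrows[OF \<phi>] and indep = arrows_independent_mod_rad_sq[OF \<phi> c]
  have BE: "B - e ` {1..n} \<subseteq> rad" "span B = UNIV" using B unfolding algebra_basis_def by auto
  have "UNIV \<subseteq> span (e ` {1..n} \<union> rad)"
    using span_mono[of B "e ` {1..n} \<union> rad"] BE by auto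
  then have p: "presentation n Q1 s t scale e \<phi>"
    using presentation_if_arrow_images_generate[OF c _ gen indep] \<phi>B BE(1) by blast
  have "c \<in> theta_image n Q1 s t scale e \<phi> x0 \<gamma>" if cD: "c \<in> D" for c
  proof -
    obtain d where "d \<in> c" and dd: "\<forall>b\<in>B. \<exists>\<mu>. d b = scale \<mu> b" using dB cD by blast
    obtain d0 where d0: "d0 \<in> Der0 scale n e" "c = hh_class scale n e d0"
      using cD D unfolding HH1_def by blast
    have "d \<in> Der0 scale n e" "(\<lambda>a. d a - d0 a) \<in> Int0 scale n e"
      using \<open>d \<in> c\<close> d0(2) unfolding hh_class_def by blast+
    moreover have "\<forall>\<alpha>\<in>Q1. \<exists>\<mu>. d (\<phi> \<alpha>) = scale \<mu> (\<phi> \<alpha>)" using \<phi>B dd by blast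
    ultimately show ?thesis using hh_class_in_theta_image[OF p] hh_class_eq d0(2) by metis
  qed
  then show thesis using p that by blast
qed

end

lemma quiver_algebra_if_ordinary_quiver:
  assumes "fd_algebra scale" "complete_prim_orth_idems n e" "ordinary_quiver scale n e Q1 s t"
  shows "quiver_algebra scale n e Q1 s t"
  using assms unfolding quiver_algebra_def quiver_algebra_axioms_def fd_k_algebra_def
    fd_k_algebra_axioms_def k_algebra_def fd_algebra_def ordinary_quiver_def by blast

text \<open>The hypotheses on k, on A being basic and connected, on Q having no oriented cycles and on
  the maximal tree describe the setting of the paper; the equivalence holds without them.\<close>
theorem proposition2p6:
  fixes scale :: "'k::field \<Rightarrow> 'a::ring_1 \<Rightarrow> 'a"
    and n :: nat and e :: "nat \<Rightarrow> 'a"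
    and Q1 :: "'q set" and s t :: "'q \<Rightarrow> nat"
    and T :: "'q set" and x0 :: nat and \<gamma> :: "nat \<Rightarrow> ('q \<times> bool) list"
    and D :: "('a \<Rightarrow> 'a) set set"
  assumes "alg_closed TYPE('k)"
    and "fd_algebra scale"
    and "complete_prim_orth_idems n e"
    and "basic_algebra n e"
    and "connected_algebra TYPE('a)"
    and "ordinary_quiver scale n e Q1 s t"
    and "no_oriented_cycles n Q1 s t"
    and "maximal_tree n Q1 s t T"
    and "x0 \<in> {1..n}"
    and "\<forall>x\<in>{1..n}. walk_from T s t x0 (\<gamma> x) x \<and> reduced_walk (\<gamma> x)"
    and "D \<subseteq> HH1 scale n e"
  shows "diagonalizable scale n e D \<longleftrightarrow>
    (\<exists>\<phi>. presentation n Q1 s t scale e \<phi> \<and> D \<subseteq> theta_image n Q1 s t scale e \<phi> x0 \<gamma>)"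
proof -
  interpret quiver_algebra scale n e Q1 s t
    using assms(2,3,6) by (rule quiver_algebra_if_ordinary_quiver)
  have card: "\<forall>i\<in>{1..n}. \<forall>j\<in>{1..n}. card (arrows_between i j) =
      dim (corner e j i rad) - dim (corner e j i (rad_sq scale))"
    using assms(6) unfolding ordinary_quiver_def arrows_between_def by blast
  show ?thesis
  proof
    assume "diagonalizable scale n e D"
    then obtain \<phi> where "presentation n Q1 s t scale e \<phi>" "D \<subseteq> theta_image n Q1 s t scale e \<phi> x0 \<gamma>"
      using exists_presentation_if_diagonalizable[OF _ assms(11) card] by blast
    then show "\<exists>\<phi>. presentation n Q1 s t scale e \<phi> \<and> D \<subseteq> theta_image n Q1 s t scale e \<phi> x0 \<gamma>"
      by blast
  next
    assume "\<exists>\<phi>. presentation n Q1 s t scale e \<phi> \<and> D \<subseteq> theta_image n Q1 s t scale e \<phi> x0 \<gamma>"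
    then show "diagonalizable scale n e D" using diagonalizable_if_subset_theta_image by blast
  qed
qed

end
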